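(* Let $V$ be a finite set of sites and let $\mathcal{A}$ be a finite collection of nonempty subsets of $V$. For $S=(S_i)_{i\in V}\in\{-1,1\}^V$ and $A\in\mathcal{A}$ put $S_A=\prod_{i\in A}S_i$. Let $(J_A)_{A\in\mathcal{A}}$ be independent standard Gaussian random variables, and for $x=(x_A)_{A\in\mathcal{A}}\in[0,\infty)^{\mathcal{A}}$ define $$P(x)=\mathbb{E}\left[\log \sum_{S\in\{-1,1\}^V}\exp\Big(\sum_{A\in\mathcal{A}}\big(\sqrt{x_A}\,J_A+x_A\big)S_A\Big)\right],$$ where $\mathbb{E}$ denotes expectation over $(J_A)$. Then $P$ is a convex function of $x$ on $[0,\infty)^{\mathcal{A}}$.
   Context: Equivalently, $P(x)=\mathbb{E}[\log Z]$ for the Ising spin-glass model $Z=\sum_{S}\exp(\sum_{A}\beta_A J'_A S_A)$ on the Nishimori line, where $J'_A$ are independent Gaussians with mean $J_{A0}$ and variance $\sigma_A^2>0$, and the Nishimori condition $\beta_A=J_{A0}/\sigma_A^2$ holds; the parametrization is $\beta_A=\sqrt{x_A}/\sigma_A$, $J_{A0}=\sigma_A\sqrt{x_A}$. *)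

theory Defs
  imports "HOL-Probability.Probability"
begin

definition std_gauss :: "real measure" where
  "std_gauss = density lborel std_normal_density"

definition spins :: "'v set \<Rightarrow> ('v \<Rightarrow> real) set" where
  "spins V = PiE V (\<lambda>_. {-1, 1})"

definition free_energy :: "'v set \<Rightarrow> 'v set set \<Rightarrow> ('v set \<Rightarrow> real) \<Rightarrow> real" where
  "free_energy V \<A> x =
     (\<integral>J. ln (\<Sum>S\<in>spins V. exp (\<Sum>A\<in>\<A>. (sqrt (x A) * J A + x A) * (\<Prod>i\<in>A. S i)))
       \<partial>(PiM \<A> (\<lambda>_. std_gauss)))"

definition nonneg_dom :: "'v set set \<Rightarrow> ('v set \<Rightarrow> real) set" where
  "nonneg_dom \<A> = {x \<in> extensional \<A>. \<forall>A\<in>\<A>. 0 \<le> x A}"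

end

theory Submission
  imports Defs
begin

(*
  Along the segment u(t) = y + t (x - y) let f(t) = E ln Z(sqrt(u) J + u), and write <.> for the
  Gibbs average and m_A = <S_A>. Differentiating under the expectation and integrating by parts in
  the Gaussian variable J_A gives E[J_A m_A] = sqrt(u_A) E[1 - m_A^2], and the Nishimori identity
  E[m_A^2] = E[m_A] turns the derivative into f'(t) = (sum_A d_A + sum_A d_A E[m_A]) / 2 with
  d = x - y. Differentiating once more, with a second integration by parts, the derivative of
  sum_A d_A E[m_A] is E[sum_{A,B} d_A d_B <S_A;S_B> (1 - m_B)], and the Nishimori symmetry rewrites
  it as a positively weighted average of sum_{A,B} d_A d_B <S_A;S_B>^2 >= 0 (Schur product theorem).
  Hence f' is nondecreasing on (0,1), and f is convex by the mean value theorem.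

  The Nishimori symmetry itself comes from the Cameron-Martin formula: shifting J_A by sqrt(u_A)
  produces the density exp(sum_A sqrt(u_A) J_A - u_A / 2), which is a Boltzmann weight, and the
  gauge transformations J_A -> S_A J_A preserve the Gaussian law.
*)

section \<open>Differentiation under the integral sign\<close>

lemma abs_difference_quotient_le:
  fixes f f' :: "real \<Rightarrow> real"
  assumes "s \<in> {a<..<b}" "t \<in> {a<..<b}" "s \<noteq> t"
    and "\<And>z. z \<in> {a<..<b} \<Longrightarrow> (f has_real_derivative f' z) (at z)"
    and "\<And>z. z \<in> {a<..<b} \<Longrightarrow> \<bar>f' z\<bar> \<le> B"
  shows "\<bar>(f s - f t) / (s - t)\<bar> \<le> B"
proof -
  have "norm (f s - f t) \<le> B * norm (s - t)"
    using assms by (intro field_differentiable_bound[where S="{a<..<b}" and f'=f'])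
      (auto intro: has_field_derivative_at_within)
  then show ?thesis using \<open>s \<noteq> t\<close> by (simp add: divide_le_eq abs_divide)
qed

lemma has_real_derivative_integral:
  fixes F F' :: "real \<Rightarrow> 'a \<Rightarrow> real" and B :: "'a \<Rightarrow> real"
  assumes ab: "a < t" "t < b"
    and F_integrable: "\<And>s. a < s \<Longrightarrow> s < b \<Longrightarrow> integrable M (F s)"
    and F'_measurable: "F' t \<in> borel_measurable M"
    and deriv: "\<And>x s. x \<in> space M \<Longrightarrow> a < s \<Longrightarrow> s < b \<Longrightarrow> ((\<lambda>r. F r x) has_real_derivative F' s x) (at s)"
    and B: "integrable M B"
    and bounded: "\<And>x s. x \<in> space M \<Longrightarrow> a < s \<Longrightarrow> s < b \<Longrightarrow> \<bar>F' s x\<bar> \<le> B x"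
  shows "((\<lambda>s. \<integral>x. F s x \<partial>M) has_real_derivative (\<integral>x. F' t x \<partial>M)) (at t)"
proof -
  have t: "t \<in> {a<..<b}" using ab by auto
  have "((\<lambda>s. \<integral>x. F s x \<partial>M) has_real_derivative (\<integral>x. F' t x \<partial>M)) (at t within {a<..<b})"
    unfolding has_field_derivative_iff tendsto_at_iff_sequentially
  proof (intro allI impI)
    fix X :: "nat \<Rightarrow> real"
    assume X: "\<forall>i. X i \<in> {a<..<b} - {t}" and lim: "X \<longlonglongrightarrow> t"
    have quotient_eq: "(\<integral>x. (F (X i) x - F t x) / (X i - t) \<partial>M)
        = ((\<integral>x. F (X i) x \<partial>M) - (\<integral>x. F t x \<partial>M)) / (X i - t)" for i
    proof -
      have "integrable M (F (X i))" "integrable M (F t)" using X ab by (auto intro: F_integrable)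
      then show ?thesis by (simp only: integral_divide_zero Bochner_Integration.integral_diff)
    qed
    have "(\<lambda>i. \<integral>x. (F (X i) x - F t x) / (X i - t) \<partial>M) \<longlonglongrightarrow> (\<integral>x. F' t x \<partial>M)"
    proof (rule integral_dominated_convergence[where w=B])
      show "(\<lambda>x. (F (X i) x - F t x) / (X i - t)) \<in> borel_measurable M" for i
        using X ab F_integrable by (intro borel_measurable_divide borel_measurable_diff borel_measurable_integrable) auto
      show "AE x in M. (\<lambda>i. (F (X i) x - F t x) / (X i - t)) \<longlonglongrightarrow> F' t x"
      proof (rule AE_I2)
        fix x assume x: "x \<in> space M"
        have "((\<lambda>r. F r x) has_real_derivative F' t x) (at t within {a<..<b})"
          using deriv[OF x ab] by (rule has_field_derivative_at_within)
        then have "((\<lambda>y. (F y x - F t x) / (y - t)) \<circ> X) \<longlonglongrightarrow> F' t x"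
          unfolding has_field_derivative_iff tendsto_at_iff_sequentially using X lim by blast
        then show "(\<lambda>i. (F (X i) x - F t x) / (X i - t)) \<longlonglongrightarrow> F' t x" by (simp add: comp_def)
      qed
      show "AE x in M. norm ((F (X i) x - F t x) / (X i - t)) \<le> B x" for i
        using X t deriv bounded
        by (intro AE_I2) (simp only: real_norm_def, rule abs_difference_quotient_le[where a=a and b=b], auto)
    qed (use F'_measurable B in auto)
    then show "((\<lambda>y. ((\<integral>x. F y x \<partial>M) - (\<integral>x. F t x \<partial>M)) / (y - t)) \<circ> X) \<longlonglongrightarrow> (\<integral>x. F' t x \<partial>M)"
      unfolding comp_def quotient_eq .
  qed
  moreover have "at t within {a<..<b} = at t" by (rule at_within_open[OF t]) auto
  ultimately show ?thesis by simp
qed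

lemma continuous_on_integral:
  fixes F :: "real \<Rightarrow> 'a \<Rightarrow> real" and B :: "'a \<Rightarrow> real"
  assumes F_measurable: "\<And>s. s \<in> S \<Longrightarrow> F s \<in> borel_measurable M"
    and continuous: "\<And>x. x \<in> space M \<Longrightarrow> continuous_on S (\<lambda>s. F s x)"
    and B: "integrable M B"
    and bounded: "\<And>x s. x \<in> space M \<Longrightarrow> s \<in> S \<Longrightarrow> \<bar>F s x\<bar> \<le> B x"
  shows "continuous_on S (\<lambda>s. \<integral>x. F s x \<partial>M)"
proof (rule continuous_on_sequentiallyI)
  fix u :: "nat \<Rightarrow> real" and a assume u: "\<forall>n. u n \<in> S" and a: "a \<in> S" and lim: "u \<longlonglongrightarrow> a"
  show "(\<lambda>n. \<integral>x. F (u n) x \<partial>M) \<longlonglongrightarrow> (\<integral>x. F a x \<partial>M)"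
  proof (rule integral_dominated_convergence[where w=B])
    show "AE x in M. (\<lambda>i. F (u i) x) \<longlonglongrightarrow> F a x"
      using u by (intro AE_I2 continuous_on_tendsto_compose[OF continuous lim a]) auto
    show "AE x in M. norm (F (u i) x) \<le> B x" for i
      using bounded u by (intro AE_I2) auto
  qed (use F_measurable u a B in auto)
qed

section \<open>Standard Gaussian vectors\<close>

lemma space_std_gauss [simp]: "space std_gauss = UNIV"
  by (simp add: std_gauss_def)

lemma sets_std_gauss [simp]: "sets std_gauss = sets borel"
  by (simp add: std_gauss_def)

lemma measurable_from_std_gauss [simp]: "measurable std_gauss N = measurable borel N"
  by (rule measurable_cong_sets[OF sets_std_gauss refl])

lemma measurable_to_std_gauss [simp]: "measurable N std_gauss = measurable N borel"
  by (rule measurable_cong_sets[OF refl sets_std_gauss])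

lemma prob_space_std_gauss: "prob_space std_gauss"
  unfolding std_gauss_def by (rule prob_space_normal_density) simp

lemma distr_std_gauss_shift:
  "distr std_gauss std_gauss (\<lambda>g. g + a) = density std_gauss (\<lambda>g. ennreal (exp (a * g - a\<^sup>2 / 2)))"
proof -
  let ?phi = "\<lambda>x. ennreal (std_normal_density x)"
  have "distr std_gauss std_gauss (\<lambda>g. g + a) = distr (density lborel ?phi) borel ((+) a)"
    by (rule distr_cong) (auto simp: std_gauss_def)
  also have "\<dots> = density lborel (\<lambda>g. ?phi (g - a))"
  proof -
    have "density (distr lborel borel ((+) a)) (\<lambda>g. ?phi (g - a))
        = distr (density lborel (\<lambda>x. ?phi (a + x - a))) borel ((+) a)"
      by (rule density_distr) auto
    then show ?thesis by (simp add: lborel_distr_plus)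
  qed
  also have "(\<lambda>g. ?phi (g - a)) = (\<lambda>g. ?phi g * ennreal (exp (a * g - a\<^sup>2 / 2)))"
  proof
    fix g
    have "std_normal_density g * exp (a * g - a\<^sup>2 / 2) = std_normal_density (g - a)"
      unfolding std_normal_density_def
      by (simp add: mult.assoc exp_add[symmetric] power2_eq_square field_simps)
    then show "?phi (g - a) = ?phi g * ennreal (exp (a * g - a\<^sup>2 / 2))"
      by (simp add: ennreal_mult'[symmetric])
  qed
  also have "density lborel \<dots> = density std_gauss (\<lambda>g. ennreal (exp (a * g - a\<^sup>2 / 2)))"
    unfolding std_gauss_def by (rule density_density_eq[symmetric]) auto
  finally show ?thesis .
qed

lemma distr_std_gauss_uminus: "distr std_gauss std_gauss uminus = std_gauss"
proof -
  let ?phi = "\<lambda>x. ennreal (std_normal_density x)"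
  have "density (distr lborel borel uminus) ?phi = distr (density lborel (\<lambda>x. ?phi (- x))) borel uminus"
    by (rule density_distr) auto
  then show ?thesis
    by (simp add: lborel_distr_uminus std_normal_density_def std_gauss_def cong: distr_cong)
qed

lemma integrable_std_gauss_exp_linear: "integrable std_gauss (\<lambda>g. exp (a * g))"
proof -
  interpret prob_space std_gauss by (rule prob_space_std_gauss)
  have "(\<integral>\<^sup>+g. ennreal (exp (a * g - a\<^sup>2 / 2)) \<partial>std_gauss)
      = emeasure (distr std_gauss std_gauss (\<lambda>g. g + a)) UNIV"
    by (simp add: distr_std_gauss_shift emeasure_density)
  also have "\<dots> = 1"
    by (subst emeasure_distr) (auto simp: emeasure_space_1[simplified])
  finally have "integrable std_gauss (\<lambda>g. exp (a\<^sup>2 / 2) * exp (a * g - a\<^sup>2 / 2))"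
    by (intro integrable_mult_right integrableI_nonneg) auto
  then show ?thesis by (simp add: exp_add[symmetric])
qed

lemma integrable_std_gauss_exp_abs: "integrable std_gauss (\<lambda>g. exp (c * \<bar>g\<bar>))"
proof (rule Bochner_Integration.integrable_bound[OF Bochner_Integration.integrable_add
      [OF integrable_std_gauss_exp_linear[of c] integrable_std_gauss_exp_linear[of "-c"]]])
  show "AE g in std_gauss. norm (exp (c * \<bar>g\<bar>)) \<le> norm (exp (c * g) + exp (- c * g))"
  proof (intro AE_I2)
    fix g :: real
    have "exp (c * \<bar>g\<bar>) \<le> exp (c * g) + exp (- c * g)"
      by (cases "g \<ge> 0") (auto simp: add_increasing add_increasing2)
    then show "norm (exp (c * \<bar>g\<bar>)) \<le> norm (exp (c * g) + exp (- c * g))"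
      by (simp add: add_pos_pos)
  qed
qed simp

lemma integrable_std_gauss_abs: "integrable std_gauss (\<lambda>g. \<bar>g\<bar>)"
proof (rule Bochner_Integration.integrable_bound[OF integrable_std_gauss_exp_abs[of 1]])
  have "\<bar>g\<bar> \<le> exp \<bar>g\<bar>" for g :: real
    using exp_ge_add_one_self[of "\<bar>g\<bar>"] by linarith
  then show "AE g in std_gauss. norm \<bar>g\<bar> \<le> norm (exp (1 * \<bar>g\<bar>))"
    by (intro AE_I2) simp
qed simp

abbreviation std_gauss_PiM :: "'i set \<Rightarrow> ('i \<Rightarrow> real) measure" where
  "std_gauss_PiM I \<equiv> PiM I (\<lambda>_. std_gauss)"

lemma prob_space_std_gauss_PiM: "prob_space (std_gauss_PiM I)"
  by (intro prob_space_PiM prob_space_std_gauss)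

lemma measurable_std_gauss_PiM_component:
  "i \<in> I \<Longrightarrow> f \<in> borel_measurable borel \<Longrightarrow> (\<lambda>x. f (x i)) \<in> borel_measurable (std_gauss_PiM I)"
  by (rule measurable_compose[OF measurable_component_singleton]) simp_all

lemma borel_measurable_std_gauss_PiM_component: "i \<in> I \<Longrightarrow> (\<lambda>x. x i) \<in> borel_measurable (std_gauss_PiM I)"
  using measurable_std_gauss_PiM_component[of i I "\<lambda>g. g"] by simp

lemma measurable_std_gauss_PiM_componentwise:
  assumes "\<And>i. T i \<in> borel_measurable borel"
  shows "(\<lambda>x. \<lambda>i\<in>I. T i (x i)) \<in> measurable (std_gauss_PiM I) (std_gauss_PiM I)"
  using assms by (intro measurable_restrict) (simp add: measurable_std_gauss_PiM_component)

lemma distr_std_gauss_PiM_componentwise: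
  fixes T :: "'i \<Rightarrow> real \<Rightarrow> real"
  assumes I: "finite I" and T: "\<And>i. T i \<in> borel_measurable borel"
  shows "distr (std_gauss_PiM I) (std_gauss_PiM I) (\<lambda>x. \<lambda>i\<in>I. T i (x i))
       = PiM I (\<lambda>i. distr std_gauss std_gauss (T i))"
proof -
  interpret sg: prob_space std_gauss by (rule prob_space_std_gauss)
  interpret N: product_prob_space "\<lambda>i. distr std_gauss std_gauss (T i)"
    by (rule product_prob_spaceI) (auto intro!: sg.prob_space_distr T)
  interpret S: product_prob_space "\<lambda>_. std_gauss"
    by (rule product_prob_spaceI) (rule prob_space_std_gauss)
  note mT = measurable_std_gauss_PiM_componentwise[OF T]
  show ?thesis
  proof (rule N.PiM_eqI[OF I])
    show "sets (distr (std_gauss_PiM I) (std_gauss_PiM I) (\<lambda>x. \<lambda>i\<in>I. T i (x i)))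
        = sets (PiM I (\<lambda>i. distr std_gauss std_gauss (T i)))"
      unfolding sets_distr by (rule sets_PiM_cong) simp_all
    fix A assume "\<And>i. i \<in> I \<Longrightarrow> A i \<in> sets (distr std_gauss std_gauss (T i))"
    then have A: "A i \<in> sets borel" if "i \<in> I" for i using that by simp
    have TA: "T i -` A i \<in> sets std_gauss" if "i \<in> I" for i
      using measurable_sets[OF T A[OF that]] by simp
    have "(\<lambda>x. \<lambda>i\<in>I. T i (x i)) -` PiE I A \<inter> space (std_gauss_PiM I) = PiE I (\<lambda>i. T i -` A i)"
      by (auto simp: space_PiM PiE_iff)
    then have "emeasure (distr (std_gauss_PiM I) (std_gauss_PiM I) (\<lambda>x. \<lambda>i\<in>I. T i (x i))) (PiE I A)
        = emeasure (std_gauss_PiM I) (PiE I (\<lambda>i. T i -` A i))"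
      using A by (subst emeasure_distr[OF mT]) (auto intro!: sets_PiM_I_finite I)
    also have "\<dots> = (\<Prod>i\<in>I. emeasure std_gauss (T i -` A i))"
      using TA by (rule S.emeasure_PiM[OF I])
    also have "\<dots> = (\<Prod>i\<in>I. emeasure (distr std_gauss std_gauss (T i)) (A i))"
      using A T by (intro prod.cong refl) (simp add: emeasure_distr)
    finally show "emeasure (distr (std_gauss_PiM I) (std_gauss_PiM I) (\<lambda>x. \<lambda>i\<in>I. T i (x i))) (PiE I A)
        = (\<Prod>i\<in>I. emeasure (distr std_gauss std_gauss (T i)) (A i))" .
  qed
qed

lemma PiM_density_std_gauss:
  fixes w :: "'i \<Rightarrow> real \<Rightarrow> ennreal"
  assumes I: "finite I" and w: "\<And>i. w i \<in> borel_measurable borel"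
    and prob: "\<And>i. prob_space (density std_gauss (w i))"
  shows "PiM I (\<lambda>i. density std_gauss (w i)) = density (std_gauss_PiM I) (\<lambda>x. \<Prod>i\<in>I. w i (x i))"
proof -
  interpret N: product_prob_space "\<lambda>i. density std_gauss (w i)"
    by (rule product_prob_spaceI) (rule prob)
  interpret S: product_prob_space "\<lambda>_. std_gauss"
    by (rule product_prob_spaceI) (rule prob_space_std_gauss)
  show ?thesis
  proof (rule N.PiM_eqI[OF I, symmetric])
    show "sets (density (std_gauss_PiM I) (\<lambda>x. \<Prod>i\<in>I. w i (x i))) = sets (PiM I (\<lambda>i. density std_gauss (w i)))"
      unfolding sets_density by (rule sets_PiM_cong) simp_all
    fix A assume "\<And>i. i \<in> I \<Longrightarrow> A i \<in> sets (density std_gauss (w i))"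
    then have A: "A i \<in> sets borel" if "i \<in> I" for i using that by simp
    have mw: "(\<lambda>x. \<Prod>i\<in>I. w i (x i)) \<in> borel_measurable (std_gauss_PiM I)"
      using w by (intro borel_measurable_prod_ennreal measurable_compose[OF measurable_component_singleton]) simp_all
    have indicator_PiE: "indicator (PiE I A) x = (\<Prod>i\<in>I. indicator (A i) (x i) :: ennreal)"
      if x: "x \<in> space (std_gauss_PiM I)" for x
    proof (cases "x \<in> PiE I A")
      case False
      then obtain i where "i \<in> I" "x i \<notin> A i" using x by (auto simp: space_PiM PiE_iff)
      then show ?thesis using False I by (auto simp: indicator_def intro!: prod_zero)
    qed (auto simp: indicator_def PiE_iff)
    have "emeasure (density (std_gauss_PiM I) (\<lambda>x. \<Prod>i\<in>I. w i (x i))) (PiE I A)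
       = (\<integral>\<^sup>+x. (\<Prod>i\<in>I. w i (x i)) * indicator (PiE I A) x \<partial>std_gauss_PiM I)"
      using A by (intro emeasure_density mw sets_PiM_I_finite I) simp_all
    also have "\<dots> = (\<integral>\<^sup>+x. (\<Prod>i\<in>I. w i (x i) * indicator (A i) (x i)) \<partial>std_gauss_PiM I)"
      by (intro nn_integral_cong) (simp add: indicator_PiE prod.distrib)
    also have "\<dots> = (\<Prod>i\<in>I. \<integral>\<^sup>+g. w i g * indicator (A i) g \<partial>std_gauss)"
      using A w by (intro S.product_nn_integral_prod[OF I]) simp
    also have "\<dots> = (\<Prod>i\<in>I. emeasure (density std_gauss (w i)) (A i))"
      using A w by (intro prod.cong refl) (simp add: emeasure_density)
    finally show "emeasure (density (std_gauss_PiM I) (\<lambda>x. \<Prod>i\<in>I. w i (x i))) (PiE I A)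
        = (\<Prod>i\<in>I. emeasure (density std_gauss (w i)) (A i))" .
  qed
qed

lemma distr_std_gauss_PiM_shift:
  fixes a :: "'i \<Rightarrow> real"
  assumes I: "finite I"
  shows "distr (std_gauss_PiM I) (std_gauss_PiM I) (\<lambda>x. \<lambda>i\<in>I. x i + a i)
       = density (std_gauss_PiM I) (\<lambda>x. ennreal (\<Prod>i\<in>I. exp (a i * x i - (a i)\<^sup>2 / 2)))"
proof -
  interpret prob_space std_gauss by (rule prob_space_std_gauss)
  have "distr (std_gauss_PiM I) (std_gauss_PiM I) (\<lambda>x. \<lambda>i\<in>I. x i + a i)
      = PiM I (\<lambda>i. density std_gauss (\<lambda>g. ennreal (exp (a i * g - (a i)\<^sup>2 / 2))))"
    using distr_std_gauss_PiM_componentwise[OF I, of "\<lambda>i g. g + a i"] by (simp add: distr_std_gauss_shift)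
  also have "\<dots> = density (std_gauss_PiM I) (\<lambda>x. \<Prod>i\<in>I. ennreal (exp (a i * x i - (a i)\<^sup>2 / 2)))"
    by (intro PiM_density_std_gauss I) (simp_all add: distr_std_gauss_shift[symmetric] prob_space_distr)
  finally show ?thesis by (simp add: prod_ennreal)
qed

lemma integral_std_gauss_PiM_shift:
  fixes a :: "'i \<Rightarrow> real" and F :: "('i \<Rightarrow> real) \<Rightarrow> real"
  assumes I: "finite I" and F: "F \<in> borel_measurable (std_gauss_PiM I)"
  shows "(\<integral>x. F (\<lambda>i\<in>I. x i + a i) \<partial>std_gauss_PiM I)
       = (\<integral>x. (\<Prod>i\<in>I. exp (a i * x i - (a i)\<^sup>2 / 2)) * F x \<partial>std_gauss_PiM I)"
proof -
  have "(\<integral>x. F (\<lambda>i\<in>I. x i + a i) \<partial>std_gauss_PiM I)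
      = (\<integral>x. F x \<partial>distr (std_gauss_PiM I) (std_gauss_PiM I) (\<lambda>x. \<lambda>i\<in>I. x i + a i))"
    by (intro integral_distr[symmetric] measurable_std_gauss_PiM_componentwise F) simp
  also have "\<dots> = (\<integral>x. (\<Prod>i\<in>I. exp (a i * x i - (a i)\<^sup>2 / 2)) *\<^sub>R F x \<partial>std_gauss_PiM I)"
    unfolding distr_std_gauss_PiM_shift[OF I]
    by (intro integral_density F borel_measurable_prod measurable_std_gauss_PiM_component AE_I2 prod_nonneg)
      auto
  finally show ?thesis by simp
qed

lemma integrable_std_gauss_PiM_tilted:
  fixes a :: "'i \<Rightarrow> real" and G :: "('i \<Rightarrow> real) \<Rightarrow> real"
  assumes I: "finite I" and G: "G \<in> borel_measurable (std_gauss_PiM I)"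
    and bounded: "\<And>x. x \<in> space (std_gauss_PiM I) \<Longrightarrow> \<bar>G x\<bar> \<le> C"
  shows "integrable (std_gauss_PiM I) (\<lambda>x. (\<Prod>i\<in>I. exp (a i * x i - (a i)\<^sup>2 / 2)) * G x)"
proof -
  let ?W = "\<lambda>x. \<Prod>i\<in>I. exp (a i * x i - (a i)\<^sup>2 / 2)"
  interpret P: prob_space "std_gauss_PiM I" by (rule prob_space_std_gauss_PiM)
  interpret D: prob_space "density (std_gauss_PiM I) (\<lambda>x. ennreal (?W x))"
    unfolding distr_std_gauss_PiM_shift[OF I, symmetric]
    by (intro P.prob_space_distr measurable_std_gauss_PiM_componentwise) simp
  have "?W \<in> borel_measurable (std_gauss_PiM I)"
    by (intro borel_measurable_prod measurable_std_gauss_PiM_component) auto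
  moreover have "integrable (density (std_gauss_PiM I) (\<lambda>x. ennreal (?W x))) G"
    using G bounded by (intro D.integrable_const_bound[where B=C] AE_I2) auto
  ultimately have "integrable (std_gauss_PiM I) (\<lambda>x. ?W x *\<^sub>R G x)"
    using G by (subst integrable_density[symmetric]) (auto intro!: prod_nonneg)
  then show ?thesis by simp
qed

lemma distr_std_gauss_PiM_sign_flip:
  assumes I: "finite I" and s: "\<And>i. i \<in> I \<Longrightarrow> s i = 1 \<or> s i = -1"
  shows "distr (std_gauss_PiM I) (std_gauss_PiM I) (\<lambda>x. \<lambda>i\<in>I. s i * x i) = std_gauss_PiM I"
proof -
  have "distr std_gauss std_gauss (\<lambda>g. s i * g) = std_gauss" if "i \<in> I" for i
    using s[OF that]
  proof
    assume "s i = -1"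
    then have "distr std_gauss std_gauss (\<lambda>g. s i * g) = distr std_gauss std_gauss uminus"
      by (intro distr_cong) auto
    then show ?thesis by (simp add: distr_std_gauss_uminus)
  qed (simp add: distr_id)
  then show ?thesis
    using distr_std_gauss_PiM_componentwise[OF I, of "\<lambda>i g. s i * g"] by (simp cong: PiM_cong)
qed

lemma
  fixes F :: "('i \<Rightarrow> real) \<Rightarrow> real"
  assumes I: "finite I" and s: "\<And>i. i \<in> I \<Longrightarrow> s i = 1 \<or> s i = -1"
    and F: "F \<in> borel_measurable (std_gauss_PiM I)"
  shows integral_std_gauss_PiM_sign_flip:
      "(\<integral>x. F (\<lambda>i\<in>I. s i * x i) \<partial>std_gauss_PiM I) = (\<integral>x. F x \<partial>std_gauss_PiM I)"
    and integrable_std_gauss_PiM_sign_flip_iff: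
      "integrable (std_gauss_PiM I) (\<lambda>x. F (\<lambda>i\<in>I. s i * x i)) \<longleftrightarrow> integrable (std_gauss_PiM I) F"
proof -
  have flip: "(\<lambda>x. \<lambda>i\<in>I. s i * x i) \<in> measurable (std_gauss_PiM I) (std_gauss_PiM I)"
    by (intro measurable_std_gauss_PiM_componentwise) simp
  show "(\<integral>x. F (\<lambda>i\<in>I. s i * x i) \<partial>std_gauss_PiM I) = (\<integral>x. F x \<partial>std_gauss_PiM I)"
    using integral_distr[OF flip F] distr_std_gauss_PiM_sign_flip[OF I s] by simp
  show "integrable (std_gauss_PiM I) (\<lambda>x. F (\<lambda>i\<in>I. s i * x i)) \<longleftrightarrow> integrable (std_gauss_PiM I) F"
    using integrable_distr_eq[OF flip F] distr_std_gauss_PiM_sign_flip[OF I s] by simp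
qed

lemma integrable_std_gauss_PiM_component:
  fixes f :: "real \<Rightarrow> real"
  assumes i: "i \<in> I" and f: "integrable std_gauss f"
  shows "integrable (std_gauss_PiM I) (\<lambda>x. f (x i))"
proof -
  have "integrable (distr (std_gauss_PiM I) std_gauss (\<lambda>x. x i)) f"
    using f by (simp add: distr_PiM_component[OF prob_space_std_gauss i])
  moreover have "f \<in> borel_measurable std_gauss" using f by (rule borel_measurable_integrable)
  ultimately show ?thesis
    using integrable_distr_eq[OF measurable_component_singleton[OF i], of f "\<lambda>_. std_gauss"] by simp
qed

lemma integrable_std_gauss_PiM_affine_abs:
  assumes "i \<in> I"
  shows "integrable (std_gauss_PiM I) (\<lambda>x. c * \<bar>x i\<bar> + c')"
proof -
  interpret prob_space std_gauss by (rule prob_space_std_gauss)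
  have "integrable std_gauss (\<lambda>g. c * \<bar>g\<bar> + c')"
    using integrable_std_gauss_abs by simp
  then show ?thesis using integrable_std_gauss_PiM_component[OF assms] by blast
qed

lemma integrable_std_gauss_PiM_affine_abs_sum:
  "finite I \<Longrightarrow> integrable (std_gauss_PiM I) (\<lambda>x. c\<^sub>0 + (\<Sum>i\<in>I. c i * \<bar>x i\<bar> + c' i))"
  using prob_space.finite_measure[OF prob_space_std_gauss_PiM]
  by (intro finite_measure.integrable_const Bochner_Integration.integrable_add Bochner_Integration.integrable_sum
      integrable_std_gauss_PiM_affine_abs)

section \<open>Gaussian integration by parts\<close>

lemma std_gauss_PiM_shift_component_eq:
  assumes "b \<in> I" and "x \<in> space (std_gauss_PiM I)"
  shows "(\<lambda>i\<in>I. x i + (if i = b then \<alpha> else 0)) = x(b := x b + \<alpha>)"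
  using assms by (auto simp: space_PiM PiE_def extensional_def fun_eq_iff)

lemma integral_std_gauss_PiM_shift_component:
  fixes K :: "('i \<Rightarrow> real) \<Rightarrow> real"
  assumes I: "finite I" and b: "b \<in> I" and K: "K \<in> borel_measurable (std_gauss_PiM I)"
  shows "(\<integral>x. K (x(b := x b + \<alpha>)) \<partial>std_gauss_PiM I)
       = (\<integral>x. exp (\<alpha> * x b - \<alpha>\<^sup>2 / 2) * K x \<partial>std_gauss_PiM I)"
proof -
  let ?a = "\<lambda>i. if i = b then \<alpha> else 0"
  have "(\<Prod>i\<in>I. exp (?a i * x i - (?a i)\<^sup>2 / 2)) = (\<Prod>i\<in>I. if i = b then exp (\<alpha> * x b - \<alpha>\<^sup>2 / 2) else 1)"
    for x :: "'i \<Rightarrow> real"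
    by (intro prod.cong) auto
  then have "(\<Prod>i\<in>I. exp (?a i * x i - (?a i)\<^sup>2 / 2)) = exp (\<alpha> * x b - \<alpha>\<^sup>2 / 2)" for x :: "'i \<Rightarrow> real"
    using I b by simp
  then have "(\<integral>x. K (\<lambda>i\<in>I. x i + ?a i) \<partial>std_gauss_PiM I)
      = (\<integral>x. exp (\<alpha> * x b - \<alpha>\<^sup>2 / 2) * K x \<partial>std_gauss_PiM I)"
    using integral_std_gauss_PiM_shift[OF I K, of ?a] by simp
  moreover have "(\<integral>x. K (\<lambda>i\<in>I. x i + ?a i) \<partial>std_gauss_PiM I) = (\<integral>x. K (x(b := x b + \<alpha>)) \<partial>std_gauss_PiM I)"
    using b by (intro Bochner_Integration.integral_cong) (simp_all add: std_gauss_PiM_shift_component_eq)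
  ultimately show ?thesis by simp
qed

lemma exp_tilt_le_exp_abs:
  fixes s g :: real
  assumes "\<bar>s\<bar> < 1"
  shows "exp (s * g - s\<^sup>2 / 2) \<le> exp \<bar>g\<bar>"
proof -
  have "s * g \<le> \<bar>s\<bar> * \<bar>g\<bar>" by (metis abs_ge_self abs_mult)
  also have "\<dots> \<le> \<bar>g\<bar>" using assms by (intro mult_left_le_one_le) auto
  finally have "s * g - s\<^sup>2 / 2 \<le> \<bar>g\<bar>" using zero_le_power2[of s] by linarith
  then show ?thesis by simp
qed

lemma has_real_derivative_integral_tilt:
  fixes K :: "('i \<Rightarrow> real) \<Rightarrow> real"
  assumes b: "b \<in> I" and K: "K \<in> borel_measurable (std_gauss_PiM I)"
    and bounded: "\<And>x. x \<in> space (std_gauss_PiM I) \<Longrightarrow> \<bar>K x\<bar> \<le> C"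
  shows "((\<lambda>\<alpha>. \<integral>x. exp (\<alpha> * x b - \<alpha>\<^sup>2 / 2) * K x \<partial>std_gauss_PiM I)
           has_real_derivative (\<integral>x. x b * K x \<partial>std_gauss_PiM I)) (at 0)"
proof -
  note xb = borel_measurable_std_gauss_PiM_component[OF b]
  have exp_abs: "integrable (std_gauss_PiM I) (\<lambda>x. exp (c * \<bar>x b\<bar>))" for c
    by (rule integrable_std_gauss_PiM_component[OF b integrable_std_gauss_exp_abs])
  have "((\<lambda>\<alpha>. \<integral>x. exp (\<alpha> * x b - \<alpha>\<^sup>2 / 2) * K x \<partial>std_gauss_PiM I) has_real_derivative
      (\<integral>x. (x b - 0) * exp (0 * x b - 0\<^sup>2 / 2) * K x \<partial>std_gauss_PiM I)) (at 0)"
  proof (rule has_real_derivative_integral[where a="-1" and b=1 and B="\<lambda>x. 2 * \<bar>C\<bar> * exp (2 * \<bar>x b\<bar>)"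
        and F="\<lambda>s x. exp (s * x b - s\<^sup>2 / 2) * K x" and F'="\<lambda>s x. (x b - s) * exp (s * x b - s\<^sup>2 / 2) * K x"])
    show "integrable (std_gauss_PiM I) (\<lambda>x. exp (s * x b - s\<^sup>2 / 2) * K x)" if "-1 < s" "s < 1" for s
    proof (rule Bochner_Integration.integrable_bound[OF integrable_mult_right[OF exp_abs[of 1], of "\<bar>C\<bar>"]])
      show "AE x in std_gauss_PiM I. norm (exp (s * x b - s\<^sup>2 / 2) * K x) \<le> norm (\<bar>C\<bar> * exp (1 * \<bar>x b\<bar>))"
      proof (rule AE_I2)
        fix x assume x: "x \<in> space (std_gauss_PiM I)"
        have "exp (s * x b - s\<^sup>2 / 2) * \<bar>K x\<bar> \<le> exp \<bar>x b\<bar> * \<bar>C\<bar>"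
          using that exp_tilt_le_exp_abs[of s "x b"] bounded[OF x] by (intro mult_mono) auto
        then show "norm (exp (s * x b - s\<^sup>2 / 2) * K x) \<le> norm (\<bar>C\<bar> * exp (1 * \<bar>x b\<bar>))"
          by (simp add: abs_mult mult.commute)
      qed
      show "(\<lambda>x. exp (s * x b - s\<^sup>2 / 2) * K x) \<in> borel_measurable (std_gauss_PiM I)"
        using xb K by measurable
    qed
    show "((\<lambda>r. exp (r * x b - r\<^sup>2 / 2) * K x) has_real_derivative (x b - s) * exp (s * x b - s\<^sup>2 / 2) * K x) (at s)"
      for x s
      by (auto intro!: derivative_eq_intros simp: power2_eq_square algebra_simps)
    show "\<bar>(x b - s) * exp (s * x b - s\<^sup>2 / 2) * K x\<bar> \<le> 2 * \<bar>C\<bar> * exp (2 * \<bar>x b\<bar>)"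
      if x: "x \<in> space (std_gauss_PiM I)" and s: "-1 < s" "s < 1" for x s
    proof -
      have "\<bar>x b - s\<bar> \<le> 2 * exp \<bar>x b\<bar>"
        using s exp_ge_add_one_self[of "\<bar>x b\<bar>"] one_le_exp_iff[of "\<bar>x b\<bar>"] by linarith
      then have "\<bar>x b - s\<bar> * exp (s * x b - s\<^sup>2 / 2) * \<bar>K x\<bar> \<le> (2 * exp \<bar>x b\<bar>) * exp \<bar>x b\<bar> * \<bar>C\<bar>"
        using s exp_tilt_le_exp_abs[of s "x b"] bounded[OF x] by (intro mult_mono) auto
      then show ?thesis by (simp add: abs_mult exp_add[symmetric] mult_ac)
    qed
    show "(\<lambda>x. (x b - 0) * exp (0 * x b - 0\<^sup>2 / 2) * K x) \<in> borel_measurable (std_gauss_PiM I)"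
      using xb K by measurable
    show "integrable (std_gauss_PiM I) (\<lambda>x. 2 * \<bar>C\<bar> * exp (2 * \<bar>x b\<bar>))"
      using exp_abs[of 2] by simp
  qed simp_all
  then show ?thesis by simp
qed

lemma has_real_derivative_integral_shift_component:
  fixes K K' :: "('i \<Rightarrow> real) \<Rightarrow> real"
  assumes b: "b \<in> I"
    and K: "K \<in> borel_measurable (std_gauss_PiM I)" and K': "K' \<in> borel_measurable (std_gauss_PiM I)"
    and K_bounded: "\<And>x. x \<in> space (std_gauss_PiM I) \<Longrightarrow> \<bar>K x\<bar> \<le> C"
    and K'_bounded: "\<And>x. x \<in> space (std_gauss_PiM I) \<Longrightarrow> \<bar>K' x\<bar> \<le> C'"
    and deriv: "\<And>x r. x \<in> space (std_gauss_PiM I) \<Longrightarrow>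
                 ((\<lambda>r. K (x(b := r))) has_real_derivative K' (x(b := r))) (at r)"
  shows "((\<lambda>\<alpha>. \<integral>x. K (x(b := x b + \<alpha>)) \<partial>std_gauss_PiM I)
           has_real_derivative (\<integral>x. K' x \<partial>std_gauss_PiM I)) (at 0)"
proof -
  interpret prob_space "std_gauss_PiM I" by (rule prob_space_std_gauss_PiM)
  have shift_space: "x(b := x b + \<alpha>) \<in> space (std_gauss_PiM I)" if "x \<in> space (std_gauss_PiM I)" for x \<alpha>
    using that b by (auto simp: space_PiM)
  have measurable_shift: "(\<lambda>x. f (x(b := x b + \<alpha>))) \<in> borel_measurable (std_gauss_PiM I)"
    if f: "f \<in> borel_measurable (std_gauss_PiM I)" for f \<alpha>
  proof -
    have "(\<lambda>x. f (\<lambda>i\<in>I. x i + (if i = b then \<alpha> else 0))) \<in> borel_measurable (std_gauss_PiM I)"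
      by (intro measurable_compose[OF _ f] measurable_std_gauss_PiM_componentwise) simp
    then show ?thesis
      using b by (subst measurable_cong[OF arg_cong[where f=f, OF std_gauss_PiM_shift_component_eq, symmetric]])
  qed
  have "((\<lambda>\<alpha>. \<integral>x. K (x(b := x b + \<alpha>)) \<partial>std_gauss_PiM I) has_real_derivative
      (\<integral>x. K' (x(b := x b + 0)) \<partial>std_gauss_PiM I)) (at 0)"
  proof (rule has_real_derivative_integral[where a="-1" and b=1 and B="\<lambda>_. C'"
        and F="\<lambda>s x. K (x(b := x b + s))" and F'="\<lambda>s x. K' (x(b := x b + s))"])
    show "integrable (std_gauss_PiM I) (\<lambda>x. K (x(b := x b + s)))" for s
      using K_bounded shift_space by (intro integrable_const_bound[where B=C] AE_I2 measurable_shift K) auto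
    show "((\<lambda>r. K (x(b := x b + r))) has_real_derivative K' (x(b := x b + s))) (at s)"
      if "x \<in> space (std_gauss_PiM I)" for x s
      using DERIV_shift[THEN iffD1, OF deriv[OF that, of "s + x b"]] by (simp add: add.commute)
    show "\<bar>K' (x(b := x b + s))\<bar> \<le> C'" if "x \<in> space (std_gauss_PiM I)" for x s
      using K'_bounded[OF shift_space[OF that]] .
  qed (use K' measurable_shift in auto)
  then show ?thesis by simp
qed

theorem gaussian_integration_by_parts:
  fixes K K' :: "('i \<Rightarrow> real) \<Rightarrow> real"
  assumes I: "finite I" and b: "b \<in> I"
    and K: "K \<in> borel_measurable (std_gauss_PiM I)" and K': "K' \<in> borel_measurable (std_gauss_PiM I)"
    and K_bounded: "\<And>x. x \<in> space (std_gauss_PiM I) \<Longrightarrow> \<bar>K x\<bar> \<le> C"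
    and K'_bounded: "\<And>x. x \<in> space (std_gauss_PiM I) \<Longrightarrow> \<bar>K' x\<bar> \<le> C'"
    and deriv: "\<And>x r. x \<in> space (std_gauss_PiM I) \<Longrightarrow>
                 ((\<lambda>r. K (x(b := r))) has_real_derivative K' (x(b := r))) (at r)"
  shows "(\<integral>x. x b * K x \<partial>std_gauss_PiM I) = (\<integral>x. K' x \<partial>std_gauss_PiM I)"
proof -
  \<comment> \<open>Differentiate the Cameron-Martin identity for a shift of coordinate b at shift 0.\<close>
  have "((\<lambda>\<alpha>. \<integral>x. exp (\<alpha> * x b - \<alpha>\<^sup>2 / 2) * K x \<partial>std_gauss_PiM I)
          has_real_derivative (\<integral>x. K' x \<partial>std_gauss_PiM I)) (at 0)"
    using has_real_derivative_integral_shift_component[OF b K K' K_bounded K'_bounded deriv]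
    unfolding integral_std_gauss_PiM_shift_component[OF I b K] .
  then show ?thesis
    using DERIV_unique has_real_derivative_integral_tilt[OF b K K_bounded] by blast
qed

section \<open>Gibbs measures with multi-spin couplings\<close>

definition spin_prod :: "('v \<Rightarrow> real) \<Rightarrow> 'v set \<Rightarrow> real" where
  "spin_prod S A = (\<Prod>i\<in>A. S i)"

locale spin_glass =
  fixes V :: "'v set" and AA :: "'v set set"
  assumes finite_V: "finite V" and finite_AA: "finite AA" and AA_subset: "\<And>A. A \<in> AA \<Longrightarrow> A \<subseteq> V"
begin

definition hamiltonian :: "('v set \<Rightarrow> real) \<Rightarrow> ('v \<Rightarrow> real) \<Rightarrow> real" where
  "hamiltonian k S = (\<Sum>A\<in>AA. k A * spin_prod S A)"

definition gibbs_sum :: "(('v \<Rightarrow> real) \<Rightarrow> real) \<Rightarrow> ('v set \<Rightarrow> real) \<Rightarrow> real" where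
  "gibbs_sum f k = (\<Sum>S\<in>spins V. f S * exp (hamiltonian k S))"

definition partition_fn :: "('v set \<Rightarrow> real) \<Rightarrow> real" where
  "partition_fn k = gibbs_sum (\<lambda>_. 1) k"

definition gibbs_avg :: "(('v \<Rightarrow> real) \<Rightarrow> real) \<Rightarrow> ('v set \<Rightarrow> real) \<Rightarrow> real" where
  "gibbs_avg f k = gibbs_sum f k / partition_fn k"

definition magn :: "('v set \<Rightarrow> real) \<Rightarrow> 'v set \<Rightarrow> real" where
  "magn k A = gibbs_avg (\<lambda>S. spin_prod S A) k"

definition corr :: "('v set \<Rightarrow> real) \<Rightarrow> 'v set \<Rightarrow> 'v set \<Rightarrow> real" where
  "corr k A B = gibbs_avg (\<lambda>S. spin_prod S A * spin_prod S B) k"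

definition trunc_corr :: "('v set \<Rightarrow> real) \<Rightarrow> 'v set \<Rightarrow> 'v set \<Rightarrow> real" where
  "trunc_corr k A B = corr k A B - magn k A * magn k B"

lemma finite_spins: "finite (spins V)"
  unfolding spins_def using finite_V by (intro finite_PiE) auto

lemma spins_nonempty: "spins V \<noteq> {}"
proof -
  have "(\<lambda>i\<in>V. 1) \<in> spins V" unfolding spins_def by auto
  then show ?thesis by auto
qed

lemma card_spins_pos: "0 < card (spins V)"
  using finite_spins spins_nonempty by (simp add: card_gt_0_iff)

lemma spin_cases: "S \<in> spins V \<Longrightarrow> i \<in> V \<Longrightarrow> S i = 1 \<or> S i = -1"
  unfolding spins_def by (auto simp: PiE_iff)

lemma spin_prod_square:
  assumes "S \<in> spins V" "A \<subseteq> V"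
  shows "spin_prod S A * spin_prod S A = 1"
proof -
  have "spin_prod S A * spin_prod S A = (\<Prod>i\<in>A. S i * S i)"
    unfolding spin_prod_def by (simp add: prod.distrib)
  also have "\<dots> = (\<Prod>i\<in>A. 1)" using assms spin_cases by (intro prod.cong) fastforce+
  finally show ?thesis by simp
qed

lemma abs_spin_prod:
  assumes "S \<in> spins V" "A \<subseteq> V"
  shows "\<bar>spin_prod S A\<bar> = 1"
proof -
  have "\<bar>spin_prod S A\<bar> = (\<Prod>i\<in>A. \<bar>S i\<bar>)" unfolding spin_prod_def by (simp add: abs_prod)
  also have "\<dots> = (\<Prod>i\<in>A. 1)" using assms spin_cases by (intro prod.cong) fastforce+
  finally show ?thesis by simp
qed

lemma spin_prod_cases: "S \<in> spins V \<Longrightarrow> A \<subseteq> V \<Longrightarrow> spin_prod S A = 1 \<or> spin_prod S A = -1"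
  using abs_spin_prod[of S A] by linarith

lemma partition_fn_pos: "0 < partition_fn k"
  unfolding partition_fn_def gibbs_sum_def using finite_spins spins_nonempty by (intro sum_pos) auto

lemma gibbs_sum_cong: "(\<And>S. S \<in> spins V \<Longrightarrow> f S = g S) \<Longrightarrow> gibbs_sum f k = gibbs_sum g k"
  unfolding gibbs_sum_def by (intro sum.cong) auto

lemma gibbs_avg_cong: "(\<And>S. S \<in> spins V \<Longrightarrow> f S = g S) \<Longrightarrow> gibbs_avg f k = gibbs_avg g k"
  unfolding gibbs_avg_def by (simp cong: gibbs_sum_cong)

lemma gibbs_sum_add: "gibbs_sum (\<lambda>S. f S + g S) k = gibbs_sum f k + gibbs_sum g k"
  unfolding gibbs_sum_def by (simp add: distrib_right sum.distrib)

lemma gibbs_sum_diff: "gibbs_sum (\<lambda>S. f S - g S) k = gibbs_sum f k - gibbs_sum g k"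
  unfolding gibbs_sum_def by (simp add: left_diff_distrib sum_subtractf)

lemma gibbs_sum_cmult: "gibbs_sum (\<lambda>S. a * f S) k = a * gibbs_sum f k"
  unfolding gibbs_sum_def by (simp add: sum_distrib_left mult.assoc)

lemma gibbs_sum_sum: "gibbs_sum (\<lambda>S. \<Sum>B\<in>X. g B S) k = (\<Sum>B\<in>X. gibbs_sum (g B) k)"
  unfolding gibbs_sum_def by (simp add: sum_distrib_right sum.swap[of _ X])

lemma gibbs_sum_eq_partition_fn_mult_avg: "gibbs_sum f k = partition_fn k * gibbs_avg f k"
  unfolding gibbs_avg_def using partition_fn_pos[of k] by simp

lemma gibbs_avg_add: "gibbs_avg (\<lambda>S. f S + g S) k = gibbs_avg f k + gibbs_avg g k"
  unfolding gibbs_avg_def gibbs_sum_add by (simp add: add_divide_distrib)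

lemma gibbs_avg_diff: "gibbs_avg (\<lambda>S. f S - g S) k = gibbs_avg f k - gibbs_avg g k"
  unfolding gibbs_avg_def gibbs_sum_diff by (simp add: diff_divide_distrib)

lemma gibbs_avg_cmult: "gibbs_avg (\<lambda>S. a * f S) k = a * gibbs_avg f k"
  unfolding gibbs_avg_def gibbs_sum_cmult by simp

lemma gibbs_avg_sum: "gibbs_avg (\<lambda>S. \<Sum>B\<in>X. g B S) k = (\<Sum>B\<in>X. gibbs_avg (g B) k)"
  unfolding gibbs_avg_def gibbs_sum_sum by (simp add: sum_divide_distrib)

lemma gibbs_avg_const: "gibbs_avg (\<lambda>_. c) k = c"
  using gibbs_avg_cmult[of c "\<lambda>_. 1" k] partition_fn_pos[of k]
  by (simp add: gibbs_avg_def partition_fn_def)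

lemma gibbs_avg_eq_sum: "gibbs_avg f k = (\<Sum>S\<in>spins V. exp (hamiltonian k S) / partition_fn k * f S)"
  unfolding gibbs_avg_def gibbs_sum_def sum_divide_distrib by (intro sum.cong refl) simp

lemma abs_gibbs_avg_le_1:
  assumes "\<And>S. S \<in> spins V \<Longrightarrow> \<bar>f S\<bar> \<le> 1"
  shows "\<bar>gibbs_avg f k\<bar> \<le> 1"
proof -
  have "\<bar>gibbs_sum f k\<bar> \<le> (\<Sum>S\<in>spins V. \<bar>f S * exp (hamiltonian k S)\<bar>)"
    unfolding gibbs_sum_def by (rule sum_abs)
  also have "\<dots> \<le> (\<Sum>S\<in>spins V. 1 * exp (hamiltonian k S))"
    using assms by (intro sum_mono) (simp add: abs_mult)
  finally have "\<bar>gibbs_sum f k\<bar> \<le> partition_fn k" unfolding partition_fn_def gibbs_sum_def .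
  then show ?thesis
    using partition_fn_pos[of k] by (simp add: gibbs_avg_def abs_divide divide_le_eq_1)
qed

lemma abs_magn_le_1: "A \<in> AA \<Longrightarrow> \<bar>magn k A\<bar> \<le> 1"
  unfolding magn_def using abs_spin_prod AA_subset by (intro abs_gibbs_avg_le_1) simp

lemma abs_corr_le_1: "A \<in> AA \<Longrightarrow> B \<in> AA \<Longrightarrow> \<bar>corr k A B\<bar> \<le> 1"
  unfolding corr_def using abs_spin_prod AA_subset by (intro abs_gibbs_avg_le_1) (simp add: abs_mult)

lemma abs_trunc_corr_le_2:
  assumes "A \<in> AA" "B \<in> AA"
  shows "\<bar>trunc_corr k A B\<bar> \<le> 2"
proof -
  have "\<bar>magn k A * magn k B\<bar> \<le> 1"
    using abs_magn_le_1[OF assms(1)] abs_magn_le_1[OF assms(2)] by (simp add: abs_mult mult_le_one)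
  then show ?thesis unfolding trunc_corr_def using abs_corr_le_1[OF assms, of k] by linarith
qed

lemma trunc_corr_diag: "A \<in> AA \<Longrightarrow> trunc_corr k A A = 1 - (magn k A)\<^sup>2"
  unfolding trunc_corr_def corr_def
  by (subst gibbs_avg_cong[where g="\<lambda>_. 1"]) (auto simp: spin_prod_square AA_subset gibbs_avg_const power2_eq_square)

lemma trunc_corr_eq_sum:
  "trunc_corr k A B = (\<Sum>S\<in>spins V. exp (hamiltonian k S) / partition_fn k
                          * ((spin_prod S A - magn k A) * (spin_prod S B - magn k B)))"
proof -
  have "gibbs_avg (\<lambda>S. (spin_prod S A - magn k A) * (spin_prod S B - magn k B)) k
      = gibbs_avg (\<lambda>S. spin_prod S A * spin_prod S B
          - (magn k B * spin_prod S A + magn k A * spin_prod S B) + magn k A * magn k B) k"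
    by (intro gibbs_avg_cong) (simp add: algebra_simps)
  also have "\<dots> = trunc_corr k A B"
    unfolding gibbs_avg_add gibbs_avg_diff gibbs_avg_cmult gibbs_avg_const trunc_corr_def corr_def magn_def
    by simp
  finally show ?thesis unfolding gibbs_avg_eq_sum by simp
qed

text \<open>The Hadamard square of the positive semidefinite matrix of truncated correlations is
  positive semidefinite (Schur product theorem, written out for a Gram matrix).\<close>
lemma trunc_corr_square_form_nonneg: "0 \<le> (\<Sum>A\<in>AA. \<Sum>B\<in>AA. d A * d B * (trunc_corr k A B)\<^sup>2)"
proof -
  define w where "w S = exp (hamiltonian k S) / partition_fn k" for S
  define x where "x S A = spin_prod S A - magn k A" for S A
  have "(\<Sum>A\<in>AA. \<Sum>B\<in>AA. d A * d B * (trunc_corr k A B)\<^sup>2)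
      = (\<Sum>A\<in>AA. \<Sum>B\<in>AA. \<Sum>T\<in>spins V. \<Sum>S\<in>spins V.
           d A * d B * ((w S * (x S A * x S B)) * (w T * (x T A * x T B))))"
    unfolding trunc_corr_eq_sum w_def[symmetric] x_def[symmetric]
    by (simp only: power2_eq_square sum_product sum_distrib_left sum_distrib_right)
  also have "\<dots> = (\<Sum>T\<in>spins V. \<Sum>S\<in>spins V. \<Sum>A\<in>AA. \<Sum>B\<in>AA.
           (w S * w T) * ((d A * x S A * x T A) * (d B * x S B * x T B)))"
    by (simp only: sum.swap[where A=AA and B="spins V"]) (intro sum.cong refl, simp only: mult_ac)
  also have "\<dots> = (\<Sum>T\<in>spins V. \<Sum>S\<in>spins V. (w S * w T) * (\<Sum>A\<in>AA. d A * x S A * x T A)\<^sup>2)"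
    by (simp only: power2_eq_square sum_product) (simp only: sum_distrib_left)
  also have "\<dots> \<ge> 0"
    using partition_fn_pos[of k] by (intro sum_nonneg mult_nonneg_nonneg) (simp_all add: w_def)
  finally show ?thesis .
qed

lemma hamiltonian_couplings_cong: "(\<And>A. A \<in> AA \<Longrightarrow> k A = k' A) \<Longrightarrow> hamiltonian k S = hamiltonian k' S"
  unfolding hamiltonian_def by simp

lemma gibbs_avg_couplings_cong: "(\<And>A. A \<in> AA \<Longrightarrow> k A = k' A) \<Longrightarrow> gibbs_avg f k = gibbs_avg f k'"
  unfolding gibbs_avg_def partition_fn_def gibbs_sum_def
  by (simp add: hamiltonian_couplings_cong[of k k'])

lemma magn_couplings_cong: "(\<And>A. A \<in> AA \<Longrightarrow> k A = k' A) \<Longrightarrow> magn k B = magn k' B"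
  unfolding magn_def by (rule gibbs_avg_couplings_cong)

lemma trunc_corr_couplings_cong: "(\<And>A. A \<in> AA \<Longrightarrow> k A = k' A) \<Longrightarrow> trunc_corr k B C = trunc_corr k' B C"
  unfolding trunc_corr_def corr_def magn_def by (simp add: gibbs_avg_couplings_cong[of k k'])

lemma borel_measurable_gibbs_sum:
  assumes "\<And>A. A \<in> AA \<Longrightarrow> (\<lambda>x. k x A) \<in> borel_measurable M"
  shows "(\<lambda>x. gibbs_sum f (k x)) \<in> borel_measurable M"
  unfolding gibbs_sum_def hamiltonian_def
  by (intro borel_measurable_sum borel_measurable_times borel_measurable_const
      borel_measurable_exp[THEN measurable_compose[rotated]] assms)

lemma borel_measurable_gibbs_avg:
  assumes "\<And>A. A \<in> AA \<Longrightarrow> (\<lambda>x. k x A) \<in> borel_measurable M"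
  shows "(\<lambda>x. gibbs_avg f (k x)) \<in> borel_measurable M"
  unfolding gibbs_avg_def partition_fn_def using assms by (intro borel_measurable_divide borel_measurable_gibbs_sum)

lemma borel_measurable_magn:
  assumes "\<And>A. A \<in> AA \<Longrightarrow> (\<lambda>x. k x A) \<in> borel_measurable M"
  shows "(\<lambda>x. magn (k x) A) \<in> borel_measurable M"
  unfolding magn_def using assms by (rule borel_measurable_gibbs_avg)

lemma borel_measurable_trunc_corr:
  assumes "\<And>A. A \<in> AA \<Longrightarrow> (\<lambda>x. k x A) \<in> borel_measurable M"
  shows "(\<lambda>x. trunc_corr (k x) A B) \<in> borel_measurable M"
  unfolding trunc_corr_def corr_def magn_def
  using assms by (intro borel_measurable_diff borel_measurable_times borel_measurable_gibbs_avg)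

lemma borel_measurable_ln_partition_fn:
  assumes "\<And>A. A \<in> AA \<Longrightarrow> (\<lambda>x. k x A) \<in> borel_measurable M"
  shows "(\<lambda>x. ln (partition_fn (k x))) \<in> borel_measurable M"
  unfolding partition_fn_def using assms by (intro borel_measurable_ln borel_measurable_gibbs_sum)



lemma gibbs_avg_hamiltonian: "gibbs_avg (hamiltonian k') k = (\<Sum>A\<in>AA. k' A * magn k A)"
  unfolding hamiltonian_def magn_def gibbs_avg_sum gibbs_avg_cmult ..

lemma has_real_derivative_gibbs_sum:
  assumes deriv: "\<And>A. A \<in> AA \<Longrightarrow> ((\<lambda>t. k t A) has_real_derivative k' A) (at x)"
  shows "((\<lambda>t. gibbs_sum f (k t)) has_real_derivative gibbs_sum (\<lambda>S. f S * hamiltonian k' S) (k x)) (at x)"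
proof -
  have "((\<lambda>t. hamiltonian (k t) S) has_real_derivative hamiltonian k' S) (at x)" for S
    unfolding hamiltonian_def by (intro DERIV_sum DERIV_cmult_right deriv)
  then have "((\<lambda>t. \<Sum>S\<in>spins V. f S * exp (hamiltonian (k t) S)) has_real_derivative
      (\<Sum>S\<in>spins V. f S * (exp (hamiltonian (k x) S) * hamiltonian k' S))) (at x)"
    by (intro DERIV_sum DERIV_cmult DERIV_fun_exp)
  then show ?thesis unfolding gibbs_sum_def by (simp only: mult_ac)
qed

lemma has_real_derivative_partition_fn:
  assumes deriv: "\<And>A. A \<in> AA \<Longrightarrow> ((\<lambda>t. k t A) has_real_derivative k' A) (at x)"
  shows "((\<lambda>t. partition_fn (k t)) has_real_derivative gibbs_sum (hamiltonian k') (k x)) (at x)"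
  using has_real_derivative_gibbs_sum[where f="\<lambda>_. 1" and k=k and k'=k', OF deriv]
  by (simp add: partition_fn_def)

lemma has_real_derivative_gibbs_avg:
  assumes deriv: "\<And>A. A \<in> AA \<Longrightarrow> ((\<lambda>t. k t A) has_real_derivative k' A) (at x)"
  shows "((\<lambda>t. gibbs_avg f (k t)) has_real_derivative
           gibbs_avg (\<lambda>S. f S * hamiltonian k' S) (k x) - gibbs_avg f (k x) * gibbs_avg (hamiltonian k') (k x))
         (at x)"
proof -
  have "((\<lambda>t. gibbs_sum f (k t) / partition_fn (k t)) has_real_derivative
     (gibbs_sum (\<lambda>S. f S * hamiltonian k' S) (k x) * partition_fn (k x)
       - gibbs_sum f (k x) * gibbs_sum (hamiltonian k') (k x)) / (partition_fn (k x) * partition_fn (k x))) (at x)"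
    using partition_fn_pos[of "k x"]
    by (intro DERIV_divide has_real_derivative_gibbs_sum has_real_derivative_partition_fn deriv) auto
  then show ?thesis
    using partition_fn_pos[of "k x"] unfolding gibbs_avg_def by (simp add: field_simps)
qed

lemma has_real_derivative_ln_partition_fn:
  assumes deriv: "\<And>A. A \<in> AA \<Longrightarrow> ((\<lambda>t. k t A) has_real_derivative k' A) (at x)"
  shows "((\<lambda>t. ln (partition_fn (k t))) has_real_derivative (\<Sum>A\<in>AA. k' A * magn (k x) A)) (at x)"
proof -
  have "((\<lambda>t. ln (partition_fn (k t))) has_real_derivative
      1 / partition_fn (k x) * gibbs_sum (hamiltonian k') (k x)) (at x)"
    by (rule DERIV_chain2[OF DERIV_ln_divide[OF partition_fn_pos] has_real_derivative_partition_fn[OF deriv]])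
  then show ?thesis by (simp add: gibbs_avg_def[symmetric] gibbs_avg_hamiltonian)
qed

lemma has_real_derivative_magn:
  assumes deriv: "\<And>A. A \<in> AA \<Longrightarrow> ((\<lambda>t. k t A) has_real_derivative k' A) (at x)"
  shows "((\<lambda>t. magn (k t) A) has_real_derivative (\<Sum>B\<in>AA. k' B * trunc_corr (k x) A B)) (at x)"
proof -
  have "gibbs_avg (\<lambda>S. spin_prod S A * hamiltonian k' S) k0 = (\<Sum>B\<in>AA. k' B * corr k0 A B)" for k0
  proof -
    have "gibbs_avg (\<lambda>S. spin_prod S A * hamiltonian k' S) k0
        = gibbs_avg (\<lambda>S. \<Sum>B\<in>AA. k' B * (spin_prod S A * spin_prod S B)) k0"
      unfolding hamiltonian_def by (simp add: sum_distrib_left mult_ac)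
    then show ?thesis unfolding gibbs_avg_sum gibbs_avg_cmult corr_def .
  qed
  moreover have "(\<Sum>B\<in>AA. k' B * corr k0 A B) - magn k0 A * (\<Sum>B\<in>AA. k' B * magn k0 B)
      = (\<Sum>B\<in>AA. k' B * trunc_corr k0 A B)" for k0
    unfolding trunc_corr_def by (simp add: sum_distrib_left right_diff_distrib sum_subtractf mult_ac)
  ultimately show ?thesis
    using has_real_derivative_gibbs_avg[where k=k and k'=k', OF deriv, where f="\<lambda>S. spin_prod S A"]
    unfolding magn_def[symmetric] gibbs_avg_hamiltonian by simp
qed

lemma has_real_derivative_trunc_corr_single_coupling:
  assumes A: "A \<in> AA" and B: "B \<in> AA"
    and deriv: "\<And>C. C \<in> AA \<Longrightarrow> ((\<lambda>t. k t C) has_real_derivative (if C = B then \<alpha> else 0)) (at x)"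
  shows "((\<lambda>t. trunc_corr (k t) A B) has_real_derivative
           \<alpha> * (-2 * trunc_corr (k x) A B * magn (k x) B)) (at x)"
proof -
  let ?k' = "\<lambda>C. if C = B then \<alpha> else 0"
  have sum_single: "(\<Sum>C\<in>AA. ?k' C * g C) = \<alpha> * g B" for g :: "'v set \<Rightarrow> real"
    using finite_AA B by (simp add: if_distrib[of "\<lambda>x. x * y" for y] cong: if_cong)
  have "hamiltonian ?k' S = \<alpha> * spin_prod S B" for S
    unfolding hamiltonian_def by (rule sum_single)
  then have "gibbs_avg (\<lambda>S. spin_prod S A * spin_prod S B * hamiltonian ?k' S) (k x)
      = gibbs_avg (\<lambda>S. \<alpha> * spin_prod S A) (k x)"
    using spin_prod_square[OF _ AA_subset[OF B]] by (intro gibbs_avg_cong) (simp add: mult_ac)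
  then have "((\<lambda>t. corr (k t) A B) has_real_derivative
      \<alpha> * magn (k x) A - corr (k x) A B * (\<alpha> * magn (k x) B)) (at x)"
    using has_real_derivative_gibbs_avg[where k=k and k'="?k'", OF deriv, where f="\<lambda>S. spin_prod S A * spin_prod S B"]
    unfolding corr_def[symmetric] gibbs_avg_cmult magn_def[symmetric] gibbs_avg_hamiltonian sum_single
    by simp
  moreover have "((\<lambda>t. magn (k t) A) has_real_derivative \<alpha> * trunc_corr (k x) A B) (at x)"
    using has_real_derivative_magn[where k=k and k'="?k'", OF deriv, where A=A] by (simp add: sum_single)
  moreover have "((\<lambda>t. magn (k t) B) has_real_derivative \<alpha> * (1 - (magn (k x) B)\<^sup>2)) (at x)"
    using has_real_derivative_magn[where k=k and k'="?k'", OF deriv, where A=B] by (simp add: sum_single trunc_corr_diag[OF B])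
  ultimately have "((\<lambda>t. corr (k t) A B - magn (k t) A * magn (k t) B) has_real_derivative
      (\<alpha> * magn (k x) A - corr (k x) A B * (\<alpha> * magn (k x) B))
      - (\<alpha> * trunc_corr (k x) A B * magn (k x) B + \<alpha> * (1 - (magn (k x) B)\<^sup>2) * magn (k x) A)) (at x)"
    by (intro DERIV_diff DERIV_mult)
  then show ?thesis
    unfolding trunc_corr_def by (simp add: algebra_simps power2_eq_square)
qed


definition gauge :: "('v \<Rightarrow> real) \<Rightarrow> ('v \<Rightarrow> real) \<Rightarrow> 'v \<Rightarrow> real" where
  "gauge \<sigma> S = (\<lambda>i\<in>V. \<sigma> i * S i)"

definition gauge_couplings :: "('v \<Rightarrow> real) \<Rightarrow> ('v set \<Rightarrow> real) \<Rightarrow> 'v set \<Rightarrow> real" where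
  "gauge_couplings \<sigma> k = (\<lambda>A. spin_prod \<sigma> A * k A)"

lemma gauge_in_spins: "\<sigma> \<in> spins V \<Longrightarrow> S \<in> spins V \<Longrightarrow> gauge \<sigma> S \<in> spins V"
  using spin_cases[of \<sigma>] spin_cases[of S] by (fastforce simp: gauge_def spins_def)

lemma gauge_gauge:
  assumes "\<sigma> \<in> spins V" "S \<in> spins V"
  shows "gauge \<sigma> (gauge \<sigma> S) = S"
proof
  fix i show "gauge \<sigma> (gauge \<sigma> S) i = S i"
    using spin_cases[OF assms(1), of i] assms(2)
    by (cases "i \<in> V") (auto simp: gauge_def spins_def PiE_def extensional_def)
qed

lemma bij_betw_gauge: "\<sigma> \<in> spins V \<Longrightarrow> bij_betw (gauge \<sigma>) (spins V) (spins V)"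
  by (rule bij_betw_byWitness[where f'="gauge \<sigma>"]) (auto simp: gauge_gauge gauge_in_spins)

lemma spin_prod_gauge: "A \<subseteq> V \<Longrightarrow> spin_prod (gauge \<sigma> S) A = spin_prod \<sigma> A * spin_prod S A"
  unfolding spin_prod_def gauge_def by (auto simp: prod.distrib[symmetric] subset_iff intro!: prod.cong)

lemma hamiltonian_gauge_couplings: "hamiltonian (gauge_couplings \<sigma> k) S = hamiltonian k (gauge \<sigma> S)"
  unfolding hamiltonian_def gauge_couplings_def using AA_subset by (intro sum.cong refl) (simp add: spin_prod_gauge)

lemma gibbs_sum_gauge_couplings:
  assumes \<sigma>: "\<sigma> \<in> spins V"
  shows "gibbs_sum f (gauge_couplings \<sigma> k) = gibbs_sum (\<lambda>S. f (gauge \<sigma> S)) k"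
proof -
  have "gibbs_sum f (gauge_couplings \<sigma> k)
      = (\<Sum>S\<in>spins V. (\<lambda>T. f (gauge \<sigma> T) * exp (hamiltonian k T)) (gauge \<sigma> S))"
    unfolding gibbs_sum_def hamiltonian_gauge_couplings by (intro sum.cong refl) (simp add: gauge_gauge[OF \<sigma>])
  also have "\<dots> = gibbs_sum (\<lambda>S. f (gauge \<sigma> S)) k"
    unfolding gibbs_sum_def by (rule sum.reindex_bij_betw[OF bij_betw_gauge[OF \<sigma>]])
  finally show ?thesis .
qed

lemma gibbs_avg_gauge_couplings:
  "\<sigma> \<in> spins V \<Longrightarrow> gibbs_avg f (gauge_couplings \<sigma> k) = gibbs_avg (\<lambda>S. f (gauge \<sigma> S)) k"
  unfolding gibbs_avg_def partition_fn_def by (simp add: gibbs_sum_gauge_couplings)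

lemma magn_gauge_couplings:
  "\<sigma> \<in> spins V \<Longrightarrow> A \<in> AA \<Longrightarrow> magn (gauge_couplings \<sigma> k) A = spin_prod \<sigma> A * magn k A"
  unfolding magn_def by (simp add: gibbs_avg_gauge_couplings spin_prod_gauge AA_subset gibbs_avg_cmult)

lemma trunc_corr_gauge_couplings:
  assumes "\<sigma> \<in> spins V" "A \<in> AA" "B \<in> AA"
  shows "trunc_corr (gauge_couplings \<sigma> k) A B = spin_prod \<sigma> A * spin_prod \<sigma> B * trunc_corr k A B"
proof -
  have "corr (gauge_couplings \<sigma> k) A B
      = gibbs_avg (\<lambda>S. (spin_prod \<sigma> A * spin_prod \<sigma> B) * (spin_prod S A * spin_prod S B)) k"
    using assms by (simp add: corr_def gibbs_avg_gauge_couplings spin_prod_gauge AA_subset mult_ac)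
  then have "corr (gauge_couplings \<sigma> k) A B = spin_prod \<sigma> A * spin_prod \<sigma> B * corr k A B"
    unfolding gibbs_avg_cmult corr_def .
  then show ?thesis
    using assms by (simp add: trunc_corr_def magn_gauge_couplings algebra_simps)
qed

lemma gauge_sum_magn:
  assumes A: "A \<in> AA"
  shows "(\<Sum>\<sigma>\<in>spins V. exp (hamiltonian k \<sigma>) * magn (gauge_couplings \<sigma> k) A) = partition_fn k * (magn k A)\<^sup>2"
proof -
  have "(\<Sum>\<sigma>\<in>spins V. exp (hamiltonian k \<sigma>) * magn (gauge_couplings \<sigma> k) A)
      = gibbs_sum (\<lambda>\<sigma>. magn k A * spin_prod \<sigma> A) k"
    unfolding gibbs_sum_def using A by (intro sum.cong refl) (simp add: magn_gauge_couplings)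
  then show ?thesis
    by (simp add: gibbs_sum_cmult gibbs_sum_eq_partition_fn_mult_avg power2_eq_square flip: magn_def)
qed

lemma gauge_sum_magn_square:
  assumes A: "A \<in> AA"
  shows "(\<Sum>\<sigma>\<in>spins V. exp (hamiltonian k \<sigma>) * (magn (gauge_couplings \<sigma> k) A)\<^sup>2) = partition_fn k * (magn k A)\<^sup>2"
proof -
  have "(magn (gauge_couplings \<sigma> k) A)\<^sup>2 = (magn k A)\<^sup>2" if "\<sigma> \<in> spins V" for \<sigma>
    using spin_prod_square[OF that AA_subset[OF A]] magn_gauge_couplings[OF that A]
    by (simp add: power2_eq_square algebra_simps)
  then have "(\<Sum>\<sigma>\<in>spins V. exp (hamiltonian k \<sigma>) * (magn (gauge_couplings \<sigma> k) A)\<^sup>2)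
      = gibbs_sum (\<lambda>_. (magn k A)\<^sup>2) k"
    unfolding gibbs_sum_def by (intro sum.cong refl) simp
  then show ?thesis
    using gibbs_sum_cmult[of "(magn k A)\<^sup>2" "\<lambda>_. 1" k] by (simp add: partition_fn_def)
qed

lemma gauge_sum_trunc_corr:
  "(\<Sum>\<sigma>\<in>spins V. exp (hamiltonian k \<sigma>) *
      (\<Sum>A\<in>AA. \<Sum>B\<in>AA. d A * d B * (trunc_corr (gauge_couplings \<sigma> k) A B * (1 - magn (gauge_couplings \<sigma> k) B))))
   = partition_fn k * (\<Sum>A\<in>AA. \<Sum>B\<in>AA. d A * d B * (trunc_corr k A B)\<^sup>2)"
proof -
  have "d A * d B * (trunc_corr (gauge_couplings \<sigma> k) A B * (1 - magn (gauge_couplings \<sigma> k) B))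
      = (d A * d B * trunc_corr k A B) * (spin_prod \<sigma> A * spin_prod \<sigma> B - magn k B * spin_prod \<sigma> A)"
    if \<sigma>: "\<sigma> \<in> spins V" and A: "A \<in> AA" and B: "B \<in> AA" for \<sigma> A B
    using spin_prod_square[OF \<sigma> AA_subset[OF B]]
    by (simp add: trunc_corr_gauge_couplings[OF \<sigma> A B] magn_gauge_couplings[OF \<sigma> B] algebra_simps)
  then have "(\<Sum>A\<in>AA. \<Sum>B\<in>AA. d A * d B * (trunc_corr (gauge_couplings \<sigma> k) A B * (1 - magn (gauge_couplings \<sigma> k) B)))
      = (\<Sum>A\<in>AA. \<Sum>B\<in>AA. (d A * d B * trunc_corr k A B)
          * (spin_prod \<sigma> A * spin_prod \<sigma> B - magn k B * spin_prod \<sigma> A))"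
    if "\<sigma> \<in> spins V" for \<sigma>
    using that by (intro sum.cong refl) simp
  then have "(\<Sum>\<sigma>\<in>spins V. exp (hamiltonian k \<sigma>) *
      (\<Sum>A\<in>AA. \<Sum>B\<in>AA. d A * d B * (trunc_corr (gauge_couplings \<sigma> k) A B * (1 - magn (gauge_couplings \<sigma> k) B))))
    = gibbs_sum (\<lambda>\<sigma>. \<Sum>A\<in>AA. \<Sum>B\<in>AA. (d A * d B * trunc_corr k A B)
        * (spin_prod \<sigma> A * spin_prod \<sigma> B - magn k B * spin_prod \<sigma> A)) k"
    unfolding gibbs_sum_def by (intro sum.cong refl) (simp add: mult.commute)
  also have "\<dots> = (\<Sum>A\<in>AA. \<Sum>B\<in>AA. (d A * d B * trunc_corr k A B)
        * (partition_fn k * corr k A B - magn k B * (partition_fn k * magn k A)))"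
    unfolding gibbs_sum_sum gibbs_sum_cmult gibbs_sum_diff gibbs_sum_eq_partition_fn_mult_avg corr_def magn_def ..
  also have "\<dots> = partition_fn k * (\<Sum>A\<in>AA. \<Sum>B\<in>AA. d A * d B * (trunc_corr k A B)\<^sup>2)"
    unfolding sum_distrib_left trunc_corr_def by (intro sum.cong refl) (simp add: algebra_simps power2_eq_square)
  finally show ?thesis .
qed



section \<open>Gaussian couplings on the Nishimori line\<close>

definition gauss_couplings :: "('v set \<Rightarrow> real) \<Rightarrow> ('v set \<Rightarrow> real) \<Rightarrow> 'v set \<Rightarrow> real" where
  "gauss_couplings u J = (\<lambda>A. sqrt (u A) * J A)"

definition nishimori_couplings :: "('v set \<Rightarrow> real) \<Rightarrow> ('v set \<Rightarrow> real) \<Rightarrow> 'v set \<Rightarrow> real" where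
  "nishimori_couplings u J = (\<lambda>A. sqrt (u A) * J A + u A)"

lemma free_energy_eq_integral:
  "free_energy V AA u = (\<integral>J. ln (partition_fn (nishimori_couplings u J)) \<partial>std_gauss_PiM AA)"
  unfolding free_energy_def partition_fn_def gibbs_sum_def hamiltonian_def nishimori_couplings_def spin_prod_def
  by simp

lemma borel_measurable_gauss_couplings:
  "A \<in> AA \<Longrightarrow> (\<lambda>J. gauss_couplings u J A) \<in> borel_measurable (std_gauss_PiM AA)"
  unfolding gauss_couplings_def by (intro borel_measurable_times borel_measurable_const borel_measurable_std_gauss_PiM_component)

lemma borel_measurable_nishimori_couplings:
  "A \<in> AA \<Longrightarrow> (\<lambda>J. nishimori_couplings u J A) \<in> borel_measurable (std_gauss_PiM AA)"
  unfolding nishimori_couplings_def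
  by (intro borel_measurable_add borel_measurable_times borel_measurable_const borel_measurable_std_gauss_PiM_component)

text \<open>The Cameron-Martin density of the shift J \<mapsto> J + sqrt u.\<close>
definition tilt_weight :: "('v set \<Rightarrow> real) \<Rightarrow> ('v set \<Rightarrow> real) \<Rightarrow> real" where
  "tilt_weight u J = (\<Prod>A\<in>AA. exp (sqrt (u A) * J A - u A / 2))"

lemma borel_measurable_tilt_weight: "tilt_weight u \<in> borel_measurable (std_gauss_PiM AA)"
  unfolding tilt_weight_def by (intro borel_measurable_prod measurable_std_gauss_PiM_component) auto

lemma
  fixes F :: "('v set \<Rightarrow> real) \<Rightarrow> real"
  assumes u: "\<And>A. A \<in> AA \<Longrightarrow> 0 \<le> u A"
    and F_cong: "\<And>k k'. (\<And>A. A \<in> AA \<Longrightarrow> k A = k' A) \<Longrightarrow> F k = F k'"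
    and F_bounded: "\<And>k. \<bar>F k\<bar> \<le> C"
    and F: "(\<lambda>J. F (gauss_couplings u J)) \<in> borel_measurable (std_gauss_PiM AA)"
  shows integral_nishimori_couplings_eq_tilted:
      "(\<integral>J. F (nishimori_couplings u J) \<partial>std_gauss_PiM AA)
     = (\<integral>J. tilt_weight u J * F (gauss_couplings u J) \<partial>std_gauss_PiM AA)"
    and integrable_tilted:
      "integrable (std_gauss_PiM AA) (\<lambda>J. tilt_weight u J * F (gauss_couplings u J))"
proof -
  have weight: "(\<Prod>A\<in>AA. exp (sqrt (u A) * J A - (sqrt (u A))\<^sup>2 / 2)) = tilt_weight u J" for J
    unfolding tilt_weight_def using u by (intro prod.cong) auto
  have "F (nishimori_couplings u J) = F (gauss_couplings u (\<lambda>A\<in>AA. J A + sqrt (u A)))" for J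
    using u by (intro F_cong) (simp add: nishimori_couplings_def gauss_couplings_def algebra_simps)
  then show "(\<integral>J. F (nishimori_couplings u J) \<partial>std_gauss_PiM AA)
      = (\<integral>J. tilt_weight u J * F (gauss_couplings u J) \<partial>std_gauss_PiM AA)"
    using integral_std_gauss_PiM_shift[OF finite_AA F, of "\<lambda>A. sqrt (u A)"] by (simp add: weight)
  show "integrable (std_gauss_PiM AA) (\<lambda>J. tilt_weight u J * F (gauss_couplings u J))"
    using integrable_std_gauss_PiM_tilted[OF finite_AA F, where C=C and a="\<lambda>A. sqrt (u A)"] F_bounded
    by (simp add: weight)
qed

lemma tilt_weight_gauge:
  assumes u: "\<And>A. A \<in> AA \<Longrightarrow> 0 \<le> u A"
  shows "tilt_weight u (\<lambda>A\<in>AA. spin_prod \<sigma> A * J A)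
       = exp (- (\<Sum>A\<in>AA. u A) / 2) * exp (hamiltonian (gauss_couplings u J) \<sigma>)"
proof -
  have "tilt_weight u (\<lambda>A\<in>AA. spin_prod \<sigma> A * J A) = (\<Prod>A\<in>AA. exp (gauss_couplings u J A * spin_prod \<sigma> A - u A / 2))"
    unfolding tilt_weight_def by (intro prod.cong refl) (simp add: gauss_couplings_def mult_ac)
  also have "\<dots> = exp (\<Sum>A\<in>AA. gauss_couplings u J A * spin_prod \<sigma> A - u A / 2)"
    by (rule exp_sum[OF finite_AA, symmetric])
  also have "(\<Sum>A\<in>AA. gauss_couplings u J A * spin_prod \<sigma> A - u A / 2)
      = - (\<Sum>A\<in>AA. u A) / 2 + hamiltonian (gauss_couplings u J) \<sigma>"
    unfolding hamiltonian_def sum_subtractf by (simp add: sum_divide_distrib)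
  finally show ?thesis by (simp only: exp_add)
qed

lemma
  fixes F :: "('v set \<Rightarrow> real) \<Rightarrow> real"
  assumes u: "\<And>A. A \<in> AA \<Longrightarrow> 0 \<le> u A" and \<sigma>: "\<sigma> \<in> spins V"
    and F_cong: "\<And>k k'. (\<And>A. A \<in> AA \<Longrightarrow> k A = k' A) \<Longrightarrow> F k = F k'"
    and F: "(\<lambda>J. F (gauss_couplings u J)) \<in> borel_measurable (std_gauss_PiM AA)"
  shows integral_tilted_eq_gauge:
      "(\<integral>J. tilt_weight u J * F (gauss_couplings u J) \<partial>std_gauss_PiM AA)
     = (\<integral>J. exp (- (\<Sum>A\<in>AA. u A) / 2) *
            (exp (hamiltonian (gauss_couplings u J) \<sigma>) * F (gauge_couplings \<sigma> (gauss_couplings u J)))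
          \<partial>std_gauss_PiM AA)"
    and integrable_tilted_iff_gauge:
      "integrable (std_gauss_PiM AA) (\<lambda>J. tilt_weight u J * F (gauss_couplings u J))
   \<longleftrightarrow> integrable (std_gauss_PiM AA) (\<lambda>J. exp (- (\<Sum>A\<in>AA. u A) / 2) *
            (exp (hamiltonian (gauss_couplings u J) \<sigma>) * F (gauge_couplings \<sigma> (gauss_couplings u J))))"
proof -
  have sign: "spin_prod \<sigma> A = 1 \<or> spin_prod \<sigma> A = -1" if "A \<in> AA" for A
    using spin_prod_cases[OF \<sigma> AA_subset[OF that]] .
  have WF: "(\<lambda>J. tilt_weight u J * F (gauss_couplings u J)) \<in> borel_measurable (std_gauss_PiM AA)"
    using borel_measurable_tilt_weight F by (rule borel_measurable_times)
  have "F (gauss_couplings u (\<lambda>A\<in>AA. spin_prod \<sigma> A * J A)) = F (gauge_couplings \<sigma> (gauss_couplings u J))" for J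
    by (intro F_cong) (simp add: gauss_couplings_def gauge_couplings_def mult_ac)
  note flipped = this tilt_weight_gauge[OF u]
  show "(\<integral>J. tilt_weight u J * F (gauss_couplings u J) \<partial>std_gauss_PiM AA)
     = (\<integral>J. exp (- (\<Sum>A\<in>AA. u A) / 2) *
            (exp (hamiltonian (gauss_couplings u J) \<sigma>) * F (gauge_couplings \<sigma> (gauss_couplings u J)))
          \<partial>std_gauss_PiM AA)"
    using integral_std_gauss_PiM_sign_flip[where s="spin_prod \<sigma>", OF finite_AA sign WF]
    by (simp add: flipped mult.assoc)
  show "integrable (std_gauss_PiM AA) (\<lambda>J. tilt_weight u J * F (gauss_couplings u J))
   \<longleftrightarrow> integrable (std_gauss_PiM AA) (\<lambda>J. exp (- (\<Sum>A\<in>AA. u A) / 2) *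
            (exp (hamiltonian (gauss_couplings u J) \<sigma>) * F (gauge_couplings \<sigma> (gauss_couplings u J))))"
    using integrable_std_gauss_PiM_sign_flip_iff[where s="spin_prod \<sigma>", OF finite_AA sign WF]
    by (simp add: flipped mult.assoc)
qed

theorem integral_nishimori_couplings_eq_gauge_average:
  fixes F :: "('v set \<Rightarrow> real) \<Rightarrow> real"
  assumes u: "\<And>A. A \<in> AA \<Longrightarrow> 0 \<le> u A"
    and F_cong: "\<And>k k'. (\<And>A. A \<in> AA \<Longrightarrow> k A = k' A) \<Longrightarrow> F k = F k'"
    and F_bounded: "\<And>k. \<bar>F k\<bar> \<le> C"
    and F_measurable: "\<And>k. (\<And>A. A \<in> AA \<Longrightarrow> (\<lambda>J. k J A) \<in> borel_measurable (std_gauss_PiM AA)) \<Longrightarrow>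
                         (\<lambda>J. F (k J)) \<in> borel_measurable (std_gauss_PiM AA)"
  shows "(\<integral>J. F (nishimori_couplings u J) \<partial>std_gauss_PiM AA)
       = (\<integral>J. exp (- (\<Sum>A\<in>AA. u A) / 2) / card (spins V) *
            (\<Sum>\<sigma>\<in>spins V. exp (hamiltonian (gauss_couplings u J) \<sigma>) * F (gauge_couplings \<sigma> (gauss_couplings u J)))
          \<partial>std_gauss_PiM AA)"
proof -
  let ?c = "exp (- (\<Sum>A\<in>AA. u A) / 2)"
  let ?G = "\<lambda>\<sigma> J. ?c * (exp (hamiltonian (gauss_couplings u J) \<sigma>) * F (gauge_couplings \<sigma> (gauss_couplings u J)))"
  have F: "(\<lambda>J. F (gauss_couplings u J)) \<in> borel_measurable (std_gauss_PiM AA)"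
    by (intro F_measurable borel_measurable_gauss_couplings)
  note tilted = integral_nishimori_couplings_eq_tilted[OF u F_cong F_bounded F]
    integrable_tilted[OF u F_cong F_bounded F]
  have "(\<integral>J. F (nishimori_couplings u J) \<partial>std_gauss_PiM AA)
      = (\<Sum>\<sigma>\<in>spins V. (\<integral>J. tilt_weight u J * F (gauss_couplings u J) \<partial>std_gauss_PiM AA)) / card (spins V)"
    using card_spins_pos by (simp add: tilted)
  also have "\<dots> = (\<Sum>\<sigma>\<in>spins V. (\<integral>J. ?G \<sigma> J \<partial>std_gauss_PiM AA)) / card (spins V)"
    by (intro arg_cong[where f="\<lambda>x. x / _"] sum.cong refl integral_tilted_eq_gauge[OF u _ F_cong F])
  also have "\<dots> = (\<integral>J. (\<Sum>\<sigma>\<in>spins V. ?G \<sigma> J) \<partial>std_gauss_PiM AA) / card (spins V)"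
    using tilted integrable_tilted_iff_gauge[OF u _ F_cong F]
    by (intro arg_cong[where f="\<lambda>x. x / _"] Bochner_Integration.integral_sum[symmetric]) blast
  finally show ?thesis by (simp add: sum_distrib_left[symmetric])
qed


lemma integral_magn_eq_integral_magn_square:
  assumes u: "\<And>A. A \<in> AA \<Longrightarrow> 0 \<le> u A" and A: "A \<in> AA"
  shows "(\<integral>J. magn (nishimori_couplings u J) A \<partial>std_gauss_PiM AA)
       = (\<integral>J. (magn (nishimori_couplings u J) A)\<^sup>2 \<partial>std_gauss_PiM AA)"
proof -
  have "(\<integral>J. (magn (nishimori_couplings u J) A) ^ n \<partial>std_gauss_PiM AA)
      = (\<integral>J. exp (- (\<Sum>A\<in>AA. u A) / 2) / card (spins V) *
           (\<Sum>\<sigma>\<in>spins V. exp (hamiltonian (gauss_couplings u J) \<sigma>) * (magn (gauge_couplings \<sigma> (gauss_couplings u J)) A) ^ n)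
         \<partial>std_gauss_PiM AA)" for n
  proof (rule integral_nishimori_couplings_eq_gauge_average[where F="\<lambda>k. (magn k A) ^ n" and C=1])
    show "(magn k A) ^ n = (magn k' A) ^ n" if "\<And>A. A \<in> AA \<Longrightarrow> k A = k' A" for k k'
      using magn_couplings_cong[OF that] by simp
    show "\<bar>(magn k A) ^ n\<bar> \<le> 1" for k
      using abs_magn_le_1[OF A, of k] by (simp add: power_abs power_le_one)
    show "(\<lambda>J. (magn (k J) A) ^ n) \<in> borel_measurable (std_gauss_PiM AA)"
      if "\<And>A. A \<in> AA \<Longrightarrow> (\<lambda>J. k J A) \<in> borel_measurable (std_gauss_PiM AA)" for k
      using that by (intro borel_measurable_power borel_measurable_magn)
  qed (rule u)
  from this[of 1] this[of 2] show ?thesis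
    by (simp only: power_one_right gauge_sum_magn[OF A] gauge_sum_magn_square[OF A])
qed

lemma abs_trunc_corr_form_le:
  "\<bar>\<Sum>A\<in>AA. \<Sum>B\<in>AA. d A * d B * (trunc_corr k A B * (1 - magn k B))\<bar> \<le> (\<Sum>A\<in>AA. \<Sum>B\<in>AA. \<bar>d A * d B\<bar> * 4)"
proof -
  have "\<bar>d A * d B * (trunc_corr k A B * (1 - magn k B))\<bar> \<le> \<bar>d A * d B\<bar> * 4" if "A \<in> AA" "B \<in> AA" for A B
  proof -
    have "\<bar>trunc_corr k A B\<bar> * \<bar>1 - magn k B\<bar> \<le> 2 * 2"
      using abs_trunc_corr_le_2[OF that] abs_magn_le_1[OF that(2), of k] by (intro mult_mono) auto
    then show ?thesis by (simp add: abs_mult mult_left_mono)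
  qed
  then have "(\<Sum>A\<in>AA. \<Sum>B\<in>AA. \<bar>d A * d B * (trunc_corr k A B * (1 - magn k B))\<bar>)
      \<le> (\<Sum>A\<in>AA. \<Sum>B\<in>AA. \<bar>d A * d B\<bar> * 4)"
    by (intro sum_mono) auto
  then show ?thesis by (rule order_trans[OF order_trans[OF sum_abs sum_mono[OF sum_abs]]])
qed

lemma integral_trunc_corr_form_nonneg:
  assumes u: "\<And>A. A \<in> AA \<Longrightarrow> 0 \<le> u A"
  shows "0 \<le> (\<integral>J. (\<Sum>A\<in>AA. \<Sum>B\<in>AA. d A * d B *
                  (trunc_corr (nishimori_couplings u J) A B * (1 - magn (nishimori_couplings u J) B)))
              \<partial>std_gauss_PiM AA)"
proof -
  let ?F = "\<lambda>k. \<Sum>A\<in>AA. \<Sum>B\<in>AA. d A * d B * (trunc_corr k A B * (1 - magn k B))"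
  have "(\<integral>J. ?F (nishimori_couplings u J) \<partial>std_gauss_PiM AA)
      = (\<integral>J. exp (- (\<Sum>A\<in>AA. u A) / 2) / card (spins V) *
           (\<Sum>\<sigma>\<in>spins V. exp (hamiltonian (gauss_couplings u J) \<sigma>) * ?F (gauge_couplings \<sigma> (gauss_couplings u J)))
         \<partial>std_gauss_PiM AA)"
  proof (rule integral_nishimori_couplings_eq_gauge_average[where F="?F"])
    show "?F k = ?F k'" if "\<And>A. A \<in> AA \<Longrightarrow> k A = k' A" for k k'
      using trunc_corr_couplings_cong[OF that] magn_couplings_cong[OF that] by simp
    show "(\<lambda>J. ?F (k J)) \<in> borel_measurable (std_gauss_PiM AA)"
      if "\<And>A. A \<in> AA \<Longrightarrow> (\<lambda>J. k J A) \<in> borel_measurable (std_gauss_PiM AA)" for k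
      using that by (intro borel_measurable_sum borel_measurable_times borel_measurable_const borel_measurable_diff
          borel_measurable_trunc_corr borel_measurable_magn)
  qed (use u abs_trunc_corr_form_le in auto)
  also have "\<dots> = (\<integral>J. exp (- (\<Sum>A\<in>AA. u A) / 2) / card (spins V) *
           (partition_fn (gauss_couplings u J) * (\<Sum>A\<in>AA. \<Sum>B\<in>AA. d A * d B * (trunc_corr (gauss_couplings u J) A B)\<^sup>2))
         \<partial>std_gauss_PiM AA)"
    by (simp only: gauge_sum_trunc_corr)
  also have "\<dots> \<ge> 0"
    by (intro integral_nonneg_AE AE_I2 mult_nonneg_nonneg trunc_corr_square_form_nonneg
        less_imp_le[OF partition_fn_pos]) simp_all
  finally show ?thesis .
qed

lemma has_real_derivative_nishimori_couplings_update:
  "((\<lambda>r. nishimori_couplings u (J(B := r)) C) has_real_derivative (if C = B then sqrt (u B) else 0)) (at r0)"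
  unfolding nishimori_couplings_def by (cases "C = B") (auto intro!: derivative_eq_intros)

lemma integral_coupling_mult_magn:
  assumes u: "\<And>A. A \<in> AA \<Longrightarrow> 0 \<le> u A" and A: "A \<in> AA"
  shows "(\<integral>J. J A * magn (nishimori_couplings u J) A \<partial>std_gauss_PiM AA)
       = (\<integral>J. sqrt (u A) * (1 - (magn (nishimori_couplings u J) A)\<^sup>2) \<partial>std_gauss_PiM AA)"
proof (rule gaussian_integration_by_parts[OF finite_AA A, where C=1 and C'="sqrt (u A) * 2"])
  show "(\<lambda>J. sqrt (u A) * (1 - (magn (nishimori_couplings u J) A)\<^sup>2)) \<in> borel_measurable (std_gauss_PiM AA)"
    by (intro borel_measurable_times borel_measurable_diff borel_measurable_const borel_measurable_power
        borel_measurable_magn borel_measurable_nishimori_couplings)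
  show "\<bar>sqrt (u A) * (1 - (magn (nishimori_couplings u J) A)\<^sup>2)\<bar> \<le> sqrt (u A) * 2" for J
    using abs_trunc_corr_le_2[OF A A, of "nishimori_couplings u J"] u[OF A]
    by (simp add: abs_mult mult_left_mono trunc_corr_diag[OF A])
  show "((\<lambda>r. magn (nishimori_couplings u (J(A := r))) A) has_real_derivative
         sqrt (u A) * (1 - (magn (nishimori_couplings u (J(A := r))) A)\<^sup>2)) (at r)" for J r
    using has_real_derivative_magn[where k="\<lambda>r. nishimori_couplings u (J(A := r))"
        and k'="\<lambda>C. if C = A then sqrt (u A) else 0" and x=r and A=A, OF has_real_derivative_nishimori_couplings_update]
      finite_AA A by (simp add: if_distrib[of "\<lambda>x. x * y" for y] trunc_corr_diag cong: if_cong)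
qed (use abs_magn_le_1[OF A] in \<open>auto intro: borel_measurable_magn borel_measurable_nishimori_couplings\<close>)

lemma integral_coupling_mult_trunc_corr:
  assumes u: "\<And>A. A \<in> AA \<Longrightarrow> 0 \<le> u A" and A: "A \<in> AA" and B: "B \<in> AA"
  shows "(\<integral>J. J B * trunc_corr (nishimori_couplings u J) A B \<partial>std_gauss_PiM AA)
       = (\<integral>J. sqrt (u B) * (-2 * trunc_corr (nishimori_couplings u J) A B * magn (nishimori_couplings u J) B)
            \<partial>std_gauss_PiM AA)"
proof (rule gaussian_integration_by_parts[OF finite_AA B, where C=2 and C'="sqrt (u B) * 4"])
  show "(\<lambda>J. trunc_corr (nishimori_couplings u J) A B) \<in> borel_measurable (std_gauss_PiM AA)"
    by (intro borel_measurable_trunc_corr borel_measurable_nishimori_couplings)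
  show "(\<lambda>J. sqrt (u B) * (-2 * trunc_corr (nishimori_couplings u J) A B * magn (nishimori_couplings u J) B))
      \<in> borel_measurable (std_gauss_PiM AA)"
    by (intro borel_measurable_times borel_measurable_const borel_measurable_trunc_corr borel_measurable_magn
        borel_measurable_nishimori_couplings)
  show "\<bar>sqrt (u B) * (-2 * trunc_corr (nishimori_couplings u J) A B * magn (nishimori_couplings u J) B)\<bar>
      \<le> sqrt (u B) * 4" for J
  proof -
    have "\<bar>-2 * trunc_corr (nishimori_couplings u J) A B * magn (nishimori_couplings u J) B\<bar> \<le> 2 * 2 * 1"
      unfolding abs_mult using abs_trunc_corr_le_2[OF A B] abs_magn_le_1[OF B] by (intro mult_mono) auto
    then show ?thesis using u[OF B] by (simp add: abs_mult mult_left_mono)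
  qed
  show "((\<lambda>r. trunc_corr (nishimori_couplings u (J(B := r))) A B) has_real_derivative
         sqrt (u B) * (-2 * trunc_corr (nishimori_couplings u (J(B := r))) A B * magn (nishimori_couplings u (J(B := r))) B))
        (at r)" for J r
    by (rule has_real_derivative_trunc_corr_single_coupling[OF A B has_real_derivative_nishimori_couplings_update])
qed (use abs_trunc_corr_le_2[OF A B] in auto)

lemma abs_ln_partition_fn_le: "\<bar>ln (partition_fn k)\<bar> \<le> ln (card (spins V)) + (\<Sum>A\<in>AA. \<bar>k A\<bar>)"
proof -
  let ?K = "\<Sum>A\<in>AA. \<bar>k A\<bar>"
  have "\<bar>hamiltonian k S\<bar> \<le> ?K" if "S \<in> spins V" for S
  proof -
    have "\<bar>hamiltonian k S\<bar> \<le> (\<Sum>A\<in>AA. \<bar>k A * spin_prod S A\<bar>)" unfolding hamiltonian_def by (rule sum_abs)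
    also have "\<dots> = ?K" using abs_spin_prod[OF that AA_subset] by (simp add: abs_mult)
    finally show ?thesis .
  qed
  then have "- ?K \<le> hamiltonian k S" "hamiltonian k S \<le> ?K" if "S \<in> spins V" for S
    using that by (fastforce simp: abs_le_iff)+
  then have "(\<Sum>S\<in>spins V. exp (- ?K)) \<le> (\<Sum>S\<in>spins V. exp (hamiltonian k S))"
      "(\<Sum>S\<in>spins V. exp (hamiltonian k S)) \<le> (\<Sum>S\<in>spins V. exp ?K)"
    by (intro sum_mono; simp)+
  then have "card (spins V) * exp (- ?K) \<le> partition_fn k" "partition_fn k \<le> card (spins V) * exp ?K"
    unfolding partition_fn_def gibbs_sum_def by simp_all
  then have "ln (card (spins V) * exp (- ?K)) \<le> ln (partition_fn k)"
      "ln (partition_fn k) \<le> ln (card (spins V) * exp ?K)"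
    using card_spins_pos partition_fn_pos[of k] by (subst ln_le_cancel_iff; simp)+
  then have "ln (card (spins V)) - ?K \<le> ln (partition_fn k)" "ln (partition_fn k) \<le> ln (card (spins V)) + ?K"
    using card_spins_pos by (simp_all add: ln_mult)
  moreover have "0 \<le> ln (card (spins V))" using card_spins_pos by simp
  ultimately show ?thesis by linarith
qed

lemma abs_nishimori_couplings_le: "0 \<le> u A \<Longrightarrow> \<bar>nishimori_couplings u J A\<bar> \<le> sqrt (u A) * \<bar>J A\<bar> + u A"
  unfolding nishimori_couplings_def by (auto simp: abs_mult intro!: order.trans[OF abs_triangle_ineq])

lemma integrable_ln_partition_fn:
  assumes u: "\<And>A. A \<in> AA \<Longrightarrow> 0 \<le> u A"
  shows "integrable (std_gauss_PiM AA) (\<lambda>J. ln (partition_fn (nishimori_couplings u J)))"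
proof (rule Bochner_Integration.integrable_bound
    [OF integrable_std_gauss_PiM_affine_abs_sum[OF finite_AA, of "ln (card (spins V))" "\<lambda>A. sqrt (u A)" u]])
  show "(\<lambda>J. ln (partition_fn (nishimori_couplings u J))) \<in> borel_measurable (std_gauss_PiM AA)"
    by (intro borel_measurable_ln_partition_fn borel_measurable_nishimori_couplings)
  have "\<bar>ln (partition_fn (nishimori_couplings u J))\<bar>
      \<le> ln (card (spins V)) + (\<Sum>A\<in>AA. sqrt (u A) * \<bar>J A\<bar> + u A)" for J
    using u by (intro order_trans[OF abs_ln_partition_fn_le] add_left_mono sum_mono abs_nishimori_couplings_le)
  then show "AE J in std_gauss_PiM AA. norm (ln (partition_fn (nishimori_couplings u J)))
      \<le> norm (ln (card (spins V)) + (\<Sum>A\<in>AA. sqrt (u A) * \<bar>J A\<bar> + u A))"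
    by (intro AE_I2) (simp add: order_trans[OF _ abs_ge_self])
qed

end

section \<open>Convexity along a segment\<close>

locale spin_glass_segment = spin_glass V AA for V :: "'v set" and AA :: "'v set set" +
  fixes x y :: "'v set \<Rightarrow> real"
  assumes x_nonneg: "\<And>A. A \<in> AA \<Longrightarrow> 0 \<le> x A" and y_nonneg: "\<And>A. A \<in> AA \<Longrightarrow> 0 \<le> y A"
begin

definition delta :: "'v set \<Rightarrow> real" where
  "delta A = x A - y A"

definition interp :: "real \<Rightarrow> 'v set \<Rightarrow> real" where
  "interp t A = y A + t * delta A"

text \<open>The derivative in t of nishimori_couplings (interp t) J A. The case split avoids the
  square root at 0: if delta A \<noteq> 0, then interp t A > 0 for 0 < t < 1.\<close>
definition interp_coupling_deriv :: "real \<Rightarrow> ('v set \<Rightarrow> real) \<Rightarrow> 'v set \<Rightarrow> real" where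
  "interp_coupling_deriv t J A = (if delta A = 0 then 0 else delta A * J A / (2 * sqrt (interp t A)) + delta A)"

definition free_energy_interp :: "real \<Rightarrow> real" where
  "free_energy_interp t = (\<integral>J. ln (partition_fn (nishimori_couplings (interp t) J)) \<partial>std_gauss_PiM AA)"

definition mean_magn :: "real \<Rightarrow> 'v set \<Rightarrow> real" where
  "mean_magn t A = (\<integral>J. magn (nishimori_couplings (interp t) J) A \<partial>std_gauss_PiM AA)"

definition directional_magn :: "real \<Rightarrow> real" where
  "directional_magn t = (\<Sum>A\<in>AA. delta A * mean_magn t A)"

definition deriv_dominator :: "real \<Rightarrow> real \<Rightarrow> ('v set \<Rightarrow> real) \<Rightarrow> real" where
  "deriv_dominator a b J = (\<Sum>A\<in>AA. \<bar>delta A\<bar> / (2 * sqrt (min (interp a A) (interp b A))) * \<bar>J A\<bar> + \<bar>delta A\<bar>)"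

lemma interp_eq_convex_comb: "interp t A = (1 - t) * y A + t * x A"
  unfolding interp_def delta_def by (simp add: algebra_simps)

lemma interp_nonneg: "0 \<le> t \<Longrightarrow> t \<le> 1 \<Longrightarrow> A \<in> AA \<Longrightarrow> 0 \<le> interp t A"
  unfolding interp_eq_convex_comb using x_nonneg y_nonneg by simp

lemma interp_pos:
  assumes "0 < t" "t < 1" "A \<in> AA" "delta A \<noteq> 0"
  shows "0 < interp t A"
proof (rule ccontr)
  assume "\<not> 0 < interp t A"
  moreover have "0 \<le> (1 - t) * y A" "0 \<le> t * x A" using x_nonneg y_nonneg assms by auto
  ultimately have "(1 - t) * y A = 0" "t * x A = 0" unfolding interp_eq_convex_comb by linarith+
  then have "y A = 0" "x A = 0" using assms by auto
  then show False using assms unfolding delta_def by simp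
qed

lemma interp_le_max:
  assumes "0 \<le> t" "t \<le> 1"
  shows "interp t A \<le> max (x A) (y A)"
proof -
  have "(1 - t) * y A \<le> (1 - t) * max (x A) (y A)" "t * x A \<le> t * max (x A) (y A)"
    using assms by (auto intro!: mult_left_mono)
  then show ?thesis unfolding interp_eq_convex_comb by (simp add: algebra_simps)
qed

lemma min_interp_le: "a \<le> r \<Longrightarrow> r \<le> b \<Longrightarrow> min (interp a A) (interp b A) \<le> interp r A"
  unfolding interp_def by (cases "0 \<le> delta A") (auto simp: min_le_iff_disj intro: mult_right_mono mult_right_mono_neg)

lemma interp_coupling_scale:
  assumes "0 < t" "t < 1" "A \<in> AA"
  shows "delta A / (2 * sqrt (interp t A)) * sqrt (interp t A) = delta A / 2"
  using interp_pos[OF assms] by (cases "delta A = 0") auto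

lemma has_real_derivative_nishimori_couplings_interp:
  assumes "0 < t" "t < 1" "A \<in> AA"
  shows "((\<lambda>r. nishimori_couplings (interp r) J A) has_real_derivative interp_coupling_deriv t J A) (at t)"
proof (cases "delta A = 0")
  case True
  then show ?thesis by (simp add: nishimori_couplings_def interp_def interp_coupling_deriv_def)
next
  case False
  have "((\<lambda>r. sqrt (interp r A) * J A + interp r A) has_real_derivative
      inverse (sqrt (interp t A)) / 2 * delta A * J A + delta A) (at t)"
    using interp_pos[OF assms False] by (auto intro!: derivative_eq_intros simp: interp_def)
  then show ?thesis
    using False by (simp add: nishimori_couplings_def interp_coupling_deriv_def field_simps)
qed

lemma borel_measurable_interp_coupling_deriv:
  "A \<in> AA \<Longrightarrow> (\<lambda>J. interp_coupling_deriv t J A) \<in> borel_measurable (std_gauss_PiM AA)"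
  unfolding interp_coupling_deriv_def
  by (cases "delta A = 0") (simp_all add: borel_measurable_add borel_measurable_divide borel_measurable_times
      borel_measurable_std_gauss_PiM_component)

lemma abs_sum_interp_coupling_deriv_mult_le:
  assumes "0 < a" "a < r" "r < b" "b < 1" and g: "\<And>A. A \<in> AA \<Longrightarrow> \<bar>g A\<bar> \<le> K"
  shows "\<bar>\<Sum>A\<in>AA. interp_coupling_deriv r J A * g A\<bar> \<le> \<bar>K\<bar> * deriv_dominator a b J"
proof -
  have "\<bar>interp_coupling_deriv r J A\<bar> \<le> \<bar>delta A\<bar> / (2 * sqrt (min (interp a A) (interp b A))) * \<bar>J A\<bar> + \<bar>delta A\<bar>"
    if A: "A \<in> AA" for A
  proof (cases "delta A = 0")
    case False
    have min_pos: "0 < min (interp a A) (interp b A)" using interp_pos[OF _ _ A False] assms by simp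
    have min_le: "min (interp a A) (interp b A) \<le> interp r A" using assms by (intro min_interp_le) auto
    have "\<bar>delta A\<bar> * \<bar>J A\<bar> / (2 * sqrt (interp r A))
        \<le> \<bar>delta A\<bar> * \<bar>J A\<bar> / (2 * sqrt (min (interp a A) (interp b A)))"
      using min_pos min_le by (intro divide_left_mono) auto
    then show ?thesis
      using False order.strict_trans2[OF min_pos min_le]
        abs_triangle_ineq[of "delta A * J A / (2 * sqrt (interp r A))" "delta A"]
      by (simp add: interp_coupling_deriv_def abs_mult)
  qed (simp add: interp_coupling_deriv_def)
  then have "\<bar>interp_coupling_deriv r J A * g A\<bar>
      \<le> \<bar>K\<bar> * (\<bar>delta A\<bar> / (2 * sqrt (min (interp a A) (interp b A))) * \<bar>J A\<bar> + \<bar>delta A\<bar>)" if "A \<in> AA" for A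
    using g[OF that] that by (simp add: abs_mult mult.commute[of _ "\<bar>g A\<bar>"] mult_mono)
  then have "\<bar>\<Sum>A\<in>AA. interp_coupling_deriv r J A * g A\<bar>
      \<le> (\<Sum>A\<in>AA. \<bar>K\<bar> * (\<bar>delta A\<bar> / (2 * sqrt (min (interp a A) (interp b A))) * \<bar>J A\<bar> + \<bar>delta A\<bar>))"
    by (intro order_trans[OF sum_abs] sum_mono)
  then show ?thesis by (simp add: deriv_dominator_def sum_distrib_left)
qed

lemma has_real_derivative_integral_interp:
  fixes \<Phi> :: "('v set \<Rightarrow> real) \<Rightarrow> real" and \<Phi>' :: "('v set \<Rightarrow> real) \<Rightarrow> 'v set \<Rightarrow> real"
  assumes t: "0 < t" "t < 1"
    and deriv: "\<And>k k' s. (\<And>A. A \<in> AA \<Longrightarrow> ((\<lambda>r. k r A) has_real_derivative k' A) (at s)) \<Longrightarrow>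
                  ((\<lambda>r. \<Phi> (k r)) has_real_derivative (\<Sum>A\<in>AA. k' A * \<Phi>' (k s) A)) (at s)"
    and bounded: "\<And>k A. A \<in> AA \<Longrightarrow> \<bar>\<Phi>' k A\<bar> \<le> K"
    and integrable: "\<And>s. 0 < s \<Longrightarrow> s < 1 \<Longrightarrow>
                       integrable (std_gauss_PiM AA) (\<lambda>J. \<Phi> (nishimori_couplings (interp s) J))"
    and measurable: "\<And>A. A \<in> AA \<Longrightarrow>
                       (\<lambda>J. \<Phi>' (nishimori_couplings (interp t) J) A) \<in> borel_measurable (std_gauss_PiM AA)"
  shows "((\<lambda>s. \<integral>J. \<Phi> (nishimori_couplings (interp s) J) \<partial>std_gauss_PiM AA) has_real_derivative
           (\<integral>J. (\<Sum>A\<in>AA. interp_coupling_deriv t J A * \<Phi>' (nishimori_couplings (interp t) J) A) \<partial>std_gauss_PiM AA))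
         (at t)"
proof (rule has_real_derivative_integral[where a="t / 2" and b="(1 + t) / 2"
      and B="\<lambda>J. \<bar>K\<bar> * deriv_dominator (t / 2) ((1 + t) / 2) J"
      and F="\<lambda>s J. \<Phi> (nishimori_couplings (interp s) J)"
      and F'="\<lambda>s J. \<Sum>A\<in>AA. interp_coupling_deriv s J A * \<Phi>' (nishimori_couplings (interp s) J) A"])
  show "integrable (std_gauss_PiM AA) (\<lambda>J. \<bar>K\<bar> * deriv_dominator (t / 2) ((1 + t) / 2) J)"
    using integrable_std_gauss_PiM_affine_abs_sum[OF finite_AA, of 0
        "\<lambda>A. \<bar>delta A\<bar> / (2 * sqrt (min (interp (t / 2) A) (interp ((1 + t) / 2) A)))" "\<lambda>A. \<bar>delta A\<bar>"]
    by (simp add: deriv_dominator_def)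
  show "((\<lambda>r. \<Phi> (nishimori_couplings (interp r) J)) has_real_derivative
      (\<Sum>A\<in>AA. interp_coupling_deriv s J A * \<Phi>' (nishimori_couplings (interp s) J) A)) (at s)"
    if "t / 2 < s" "s < (1 + t) / 2" for J s
    using t that by (intro deriv has_real_derivative_nishimori_couplings_interp) auto
  show "\<bar>\<Sum>A\<in>AA. interp_coupling_deriv s J A * \<Phi>' (nishimori_couplings (interp s) J) A\<bar>
      \<le> \<bar>K\<bar> * deriv_dominator (t / 2) ((1 + t) / 2) J"
    if "t / 2 < s" "s < (1 + t) / 2" for J s
    using t that bounded by (intro abs_sum_interp_coupling_deriv_mult_le) auto
qed (use t integrable measurable in \<open>auto intro!: borel_measurable_sum borel_measurable_times
      borel_measurable_interp_coupling_deriv\<close>)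

lemma
  fixes G :: "('v set \<Rightarrow> real) \<Rightarrow> real"
  assumes A: "A \<in> AA" and G: "G \<in> borel_measurable (std_gauss_PiM AA)" and G_bounded: "\<And>J. \<bar>G J\<bar> \<le> C"
  shows integrable_interp_coupling_deriv_mult:
      "integrable (std_gauss_PiM AA) (\<lambda>J. interp_coupling_deriv t J A * G J)"
    and integral_interp_coupling_deriv_mult:
      "(\<integral>J. interp_coupling_deriv t J A * G J \<partial>std_gauss_PiM AA)
     = delta A / (2 * sqrt (interp t A)) * (\<integral>J. J A * G J \<partial>std_gauss_PiM AA)
       + delta A * (\<integral>J. G J \<partial>std_gauss_PiM AA)"
proof -
  interpret prob_space "std_gauss_PiM AA" by (rule prob_space_std_gauss_PiM)
  have eq: "interp_coupling_deriv t J A * G J = delta A / (2 * sqrt (interp t A)) * (J A * G J) + delta A * G J" for J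
    by (simp add: interp_coupling_deriv_def field_simps)
  have "integrable (std_gauss_PiM AA) G"
    using G G_bounded by (intro integrable_const_bound[where B=C] AE_I2) auto
  moreover have "integrable (std_gauss_PiM AA) (\<lambda>J. J A * G J)"
  proof (rule Bochner_Integration.integrable_bound[OF integrable_std_gauss_PiM_affine_abs[OF A, of "\<bar>C\<bar>" 0]])
    have "\<bar>J A\<bar> * \<bar>G J\<bar> \<le> \<bar>J A\<bar> * \<bar>C\<bar>" for J
      using G_bounded[of J] by (intro mult_left_mono) auto
    then show "AE J in std_gauss_PiM AA. norm (J A * G J) \<le> norm (\<bar>C\<bar> * \<bar>J A\<bar> + 0)"
      by (intro AE_I2) (simp add: abs_mult mult.commute)
  qed (use G borel_measurable_std_gauss_PiM_component[OF A] in measurable)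
  ultimately show "integrable (std_gauss_PiM AA) (\<lambda>J. interp_coupling_deriv t J A * G J)"
    and "(\<integral>J. interp_coupling_deriv t J A * G J \<partial>std_gauss_PiM AA)
       = delta A / (2 * sqrt (interp t A)) * (\<integral>J. J A * G J \<partial>std_gauss_PiM AA)
         + delta A * (\<integral>J. G J \<partial>std_gauss_PiM AA)"
    unfolding eq by simp_all
qed


lemma integral_interp_coupling_deriv_mult_magn:
  assumes t: "0 < t" "t < 1" and A: "A \<in> AA"
  shows "(\<integral>J. interp_coupling_deriv t J A * magn (nishimori_couplings (interp t) J) A \<partial>std_gauss_PiM AA)
       = delta A / 2 + delta A / 2 * mean_magn t A"
proof -
  interpret prob_space "std_gauss_PiM AA" by (rule prob_space_std_gauss_PiM)
  let ?m = "\<lambda>J. magn (nishimori_couplings (interp t) J) A"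
  have u: "0 \<le> interp t B" if "B \<in> AA" for B using t that by (intro interp_nonneg) auto
  have m: "?m \<in> borel_measurable (std_gauss_PiM AA)"
    by (intro borel_measurable_magn borel_measurable_nishimori_couplings)
  have m_square: "integrable (std_gauss_PiM AA) (\<lambda>J. (?m J)\<^sup>2)"
    using m abs_magn_le_1[OF A] by (intro integrable_const_bound[where B=1] AE_I2) (auto simp: abs_square_le_1)
  have "(\<integral>J. interp_coupling_deriv t J A * ?m J \<partial>std_gauss_PiM AA)
      = delta A / (2 * sqrt (interp t A)) * (\<integral>J. J A * ?m J \<partial>std_gauss_PiM AA) + delta A * mean_magn t A"
    unfolding mean_magn_def by (rule integral_interp_coupling_deriv_mult[OF A m abs_magn_le_1[OF A]])
  also have "(\<integral>J. J A * ?m J \<partial>std_gauss_PiM AA) = (\<integral>J. sqrt (interp t A) * (1 - (?m J)\<^sup>2) \<partial>std_gauss_PiM AA)"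
    by (rule integral_coupling_mult_magn[where u="interp t", OF u A])
  also have "\<dots> = sqrt (interp t A) * (1 - (\<integral>J. (?m J)\<^sup>2 \<partial>std_gauss_PiM AA))"
    using m_square prob_space by (simp add: Bochner_Integration.integral_diff)
  also have "(\<integral>J. (?m J)\<^sup>2 \<partial>std_gauss_PiM AA) = mean_magn t A"
    unfolding mean_magn_def by (rule integral_magn_eq_integral_magn_square[where u="interp t", OF u A, symmetric])
  also have "delta A / (2 * sqrt (interp t A)) * (sqrt (interp t A) * (1 - mean_magn t A)) + delta A * mean_magn t A
      = delta A / 2 + delta A / 2 * mean_magn t A"
    by (simp only: mult.assoc[symmetric] interp_coupling_scale[OF t A]) (simp add: algebra_simps)
  finally show ?thesis .
qed

lemma integral_interp_coupling_deriv_mult_trunc_corr: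
  assumes t: "0 < t" "t < 1" and A: "A \<in> AA" and B: "B \<in> AA"
  shows "(\<integral>J. interp_coupling_deriv t J B * trunc_corr (nishimori_couplings (interp t) J) A B \<partial>std_gauss_PiM AA)
       = delta B * (\<integral>J. trunc_corr (nishimori_couplings (interp t) J) A B * (1 - magn (nishimori_couplings (interp t) J) B)
                      \<partial>std_gauss_PiM AA)"
proof -
  interpret prob_space "std_gauss_PiM AA" by (rule prob_space_std_gauss_PiM)
  let ?c = "\<lambda>J. trunc_corr (nishimori_couplings (interp t) J) A B"
  let ?m = "\<lambda>J. magn (nishimori_couplings (interp t) J) B"
  have u: "0 \<le> interp t C" if "C \<in> AA" for C using t that by (intro interp_nonneg) auto
  have c: "?c \<in> borel_measurable (std_gauss_PiM AA)"
    by (intro borel_measurable_trunc_corr borel_measurable_nishimori_couplings)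
  have c_integrable: "integrable (std_gauss_PiM AA) ?c"
    using c abs_trunc_corr_le_2[OF A B] by (intro integrable_const_bound[where B=2] AE_I2) auto
  have cm_integrable: "integrable (std_gauss_PiM AA) (\<lambda>J. ?c J * ?m J)"
  proof (intro integrable_const_bound[where B=2] AE_I2)
    show "norm (?c J * ?m J) \<le> 2" for J
      using abs_trunc_corr_le_2[OF A B] abs_magn_le_1[OF B] mult_mono[of "\<bar>?c J\<bar>" 2 "\<bar>?m J\<bar>" 1]
      by (simp add: abs_mult)
  qed (intro borel_measurable_times c borel_measurable_magn borel_measurable_nishimori_couplings)
  have "(\<integral>J. interp_coupling_deriv t J B * ?c J \<partial>std_gauss_PiM AA)
      = delta B / (2 * sqrt (interp t B)) * (\<integral>J. J B * ?c J \<partial>std_gauss_PiM AA) + delta B * (\<integral>J. ?c J \<partial>std_gauss_PiM AA)"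
    by (rule integral_interp_coupling_deriv_mult[OF B c abs_trunc_corr_le_2[OF A B]])
  also have "(\<integral>J. J B * ?c J \<partial>std_gauss_PiM AA) = (\<integral>J. sqrt (interp t B) * (-2 * ?c J * ?m J) \<partial>std_gauss_PiM AA)"
    by (rule integral_coupling_mult_trunc_corr[where u="interp t", OF u A B])
  also have "\<dots> = sqrt (interp t B) * (-2) * (\<integral>J. ?c J * ?m J \<partial>std_gauss_PiM AA)"
    by (simp add: mult_ac)
  also have "(\<integral>J. ?c J * ?m J \<partial>std_gauss_PiM AA) = (\<integral>J. ?c J \<partial>std_gauss_PiM AA) - (\<integral>J. ?c J * (1 - ?m J) \<partial>std_gauss_PiM AA)"
    unfolding right_diff_distrib mult_1_right Bochner_Integration.integral_diff[OF c_integrable cm_integrable]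
    by simp
  finally show ?thesis
    by (simp only: mult.assoc[symmetric] interp_coupling_scale[OF t B]) (simp add: algebra_simps)
qed

lemma has_real_derivative_free_energy_interp:
  assumes t: "0 < t" "t < 1"
  shows "(free_energy_interp has_real_derivative (\<Sum>A\<in>AA. delta A) / 2 + directional_magn t / 2) (at t)"
proof -
  have "(free_energy_interp has_real_derivative
      (\<integral>J. (\<Sum>A\<in>AA. interp_coupling_deriv t J A * magn (nishimori_couplings (interp t) J) A) \<partial>std_gauss_PiM AA)) (at t)"
    unfolding free_energy_interp_def[abs_def]
  proof (rule has_real_derivative_integral_interp[OF t has_real_derivative_ln_partition_fn, where K=1])
    show "integrable (std_gauss_PiM AA) (\<lambda>J. ln (partition_fn (nishimori_couplings (interp s) J)))"
      if "0 < s" "s < 1" for s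
      using that by (intro integrable_ln_partition_fn interp_nonneg) auto
  qed (auto intro: abs_magn_le_1 borel_measurable_magn borel_measurable_nishimori_couplings)
  also have "(\<integral>J. (\<Sum>A\<in>AA. interp_coupling_deriv t J A * magn (nishimori_couplings (interp t) J) A) \<partial>std_gauss_PiM AA)
      = (\<Sum>A\<in>AA. delta A / 2 + delta A / 2 * mean_magn t A)"
    by (subst Bochner_Integration.integral_sum)
      (auto intro!: sum.cong integrable_interp_coupling_deriv_mult abs_magn_le_1 borel_measurable_magn
        borel_measurable_nishimori_couplings simp: integral_interp_coupling_deriv_mult_magn[OF t])
  also have "\<dots> = (\<Sum>A\<in>AA. delta A) / 2 + directional_magn t / 2"
    unfolding directional_magn_def sum.distrib sum_divide_distrib by (simp add: mult_ac)
  finally show ?thesis .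
qed

lemma has_real_derivative_mean_magn:
  assumes t: "0 < t" "t < 1" and A: "A \<in> AA"
  shows "((\<lambda>s. mean_magn s A) has_real_derivative
     (\<Sum>B\<in>AA. delta B * (\<integral>J. trunc_corr (nishimori_couplings (interp t) J) A B
                               * (1 - magn (nishimori_couplings (interp t) J) B) \<partial>std_gauss_PiM AA))) (at t)"
proof -
  interpret prob_space "std_gauss_PiM AA" by (rule prob_space_std_gauss_PiM)
  have "((\<lambda>s. mean_magn s A) has_real_derivative
      (\<integral>J. (\<Sum>B\<in>AA. interp_coupling_deriv t J B * trunc_corr (nishimori_couplings (interp t) J) A B)
        \<partial>std_gauss_PiM AA)) (at t)"
    unfolding mean_magn_def
  proof (rule has_real_derivative_integral_interp[OF t has_real_derivative_magn, where K=2])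
    show "integrable (std_gauss_PiM AA) (\<lambda>J. magn (nishimori_couplings (interp s) J) A)" for s
      using abs_magn_le_1[OF A]
      by (intro integrable_const_bound[where B=1] AE_I2 borel_measurable_magn borel_measurable_nishimori_couplings)
        auto
  qed (auto intro: abs_trunc_corr_le_2[OF A] borel_measurable_trunc_corr borel_measurable_nishimori_couplings)
  also have "(\<integral>J. (\<Sum>B\<in>AA. interp_coupling_deriv t J B * trunc_corr (nishimori_couplings (interp t) J) A B)
        \<partial>std_gauss_PiM AA)
      = (\<Sum>B\<in>AA. delta B * (\<integral>J. trunc_corr (nishimori_couplings (interp t) J) A B
                               * (1 - magn (nishimori_couplings (interp t) J) B) \<partial>std_gauss_PiM AA))"
    by (subst Bochner_Integration.integral_sum)
      (auto intro!: sum.cong integrable_interp_coupling_deriv_mult abs_trunc_corr_le_2[OF A]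
        borel_measurable_trunc_corr borel_measurable_nishimori_couplings
        simp: integral_interp_coupling_deriv_mult_trunc_corr[OF t A])
  finally show ?thesis .
qed



lemma has_real_derivative_directional_magn_nonneg:
  assumes t: "0 < t" "t < 1"
  shows "\<exists>D. (directional_magn has_real_derivative D) (at t) \<and> 0 \<le> D"
proof -
  interpret prob_space "std_gauss_PiM AA" by (rule prob_space_std_gauss_PiM)
  let ?X = "\<lambda>A B J. trunc_corr (nishimori_couplings (interp t) J) A B * (1 - magn (nishimori_couplings (interp t) J) B)"
  have X: "integrable (std_gauss_PiM AA) (?X A B)" if "A \<in> AA" "B \<in> AA" for A B
  proof (intro integrable_const_bound[where B=4] AE_I2)
    show "norm (?X A B J) \<le> 4" for J
      using abs_trunc_corr_le_2[OF that] abs_magn_le_1[OF that(2)]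
        mult_mono[of "\<bar>trunc_corr (nishimori_couplings (interp t) J) A B\<bar>" 2
          "\<bar>1 - magn (nishimori_couplings (interp t) J) B\<bar>" 2]
      by (simp add: abs_mult abs_le_iff)
  qed (intro borel_measurable_times borel_measurable_diff borel_measurable_const borel_measurable_trunc_corr
      borel_measurable_magn borel_measurable_nishimori_couplings)
  have "(directional_magn has_real_derivative
      (\<Sum>A\<in>AA. delta A * (\<Sum>B\<in>AA. delta B * (\<integral>J. ?X A B J \<partial>std_gauss_PiM AA)))) (at t)"
    unfolding directional_magn_def[abs_def] by (intro DERIV_sum DERIV_cmult has_real_derivative_mean_magn[OF t])
  moreover have "(\<Sum>A\<in>AA. delta A * (\<Sum>B\<in>AA. delta B * (\<integral>J. ?X A B J \<partial>std_gauss_PiM AA)))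
      = (\<integral>J. (\<Sum>A\<in>AA. \<Sum>B\<in>AA. delta A * delta B * ?X A B J) \<partial>std_gauss_PiM AA)"
    using X by (simp add: Bochner_Integration.integral_sum sum_distrib_left mult.assoc)
  moreover have "0 \<le> (\<integral>J. (\<Sum>A\<in>AA. \<Sum>B\<in>AA. delta A * delta B * ?X A B J) \<partial>std_gauss_PiM AA)"
    using t by (intro integral_trunc_corr_form_nonneg interp_nonneg) auto
  ultimately show ?thesis by auto
qed

lemma mono_directional_magn: "0 < s \<Longrightarrow> s \<le> r \<Longrightarrow> r < 1 \<Longrightarrow> directional_magn s \<le> directional_magn r"
  by (rule DERIV_nonneg_imp_nondecreasing) (auto intro: has_real_derivative_directional_magn_nonneg)

lemma continuous_on_free_energy_interp: "continuous_on {0..1} free_energy_interp"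
  unfolding free_energy_interp_def[abs_def]
proof (rule continuous_on_integral[where B="\<lambda>J. ln (card (spins V)) + (\<Sum>A\<in>AA. sqrt (max (x A) (y A)) * \<bar>J A\<bar> + max (x A) (y A))"])
  show "(\<lambda>J. ln (partition_fn (nishimori_couplings (interp s) J))) \<in> borel_measurable (std_gauss_PiM AA)" for s
    by (intro borel_measurable_ln_partition_fn borel_measurable_nishimori_couplings)
  show "continuous_on {0..1} (\<lambda>r. ln (partition_fn (nishimori_couplings (interp r) J)))" for J
  proof (rule continuous_on_ln)
    show "continuous_on {0..1} (\<lambda>r. partition_fn (nishimori_couplings (interp r) J))"
      unfolding partition_fn_def gibbs_sum_def hamiltonian_def nishimori_couplings_def interp_def
      by (intro continuous_intros)
  qed (simp add: partition_fn_pos[THEN less_imp_neq, symmetric])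
  show "integrable (std_gauss_PiM AA) (\<lambda>J. ln (card (spins V)) + (\<Sum>A\<in>AA. sqrt (max (x A) (y A)) * \<bar>J A\<bar> + max (x A) (y A)))"
    by (rule integrable_std_gauss_PiM_affine_abs_sum[OF finite_AA])
  show "\<bar>ln (partition_fn (nishimori_couplings (interp s) J))\<bar>
      \<le> ln (card (spins V)) + (\<Sum>A\<in>AA. sqrt (max (x A) (y A)) * \<bar>J A\<bar> + max (x A) (y A))"
    if "s \<in> {0..1}" for J s
  proof (rule order_trans[OF abs_ln_partition_fn_le add_left_mono[OF sum_mono]])
    fix A assume A: "A \<in> AA"
    have "0 \<le> interp s A" "interp s A \<le> max (x A) (y A)"
      using that A by (auto intro: interp_nonneg interp_le_max)
    then show "\<bar>nishimori_couplings (interp s) J A\<bar> \<le> sqrt (max (x A) (y A)) * \<bar>J A\<bar> + max (x A) (y A)"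
      by (intro order_trans[OF abs_nishimori_couplings_le] add_mono mult_right_mono) auto
  qed
qed

lemma free_energy_interp_convex:
  assumes t: "0 \<le> t" "t \<le> 1"
  shows "free_energy_interp t \<le> t * free_energy_interp 1 + (1 - t) * free_energy_interp 0"
proof (cases "t = 0 \<or> t = 1")
  case False
  then have t: "0 < t" "t < 1" using t by auto
  let ?f = free_energy_interp and ?f' = "\<lambda>z. (\<Sum>A\<in>AA. delta A) / 2 + directional_magn z / 2"
  have differentiable: "?f differentiable (at z)" if "0 < z" "z < 1" for z
    using has_real_derivative_free_energy_interp[OF that] by (auto simp: real_differentiable_def)
  obtain l\<^sub>1 z\<^sub>1 where z\<^sub>1: "0 < z\<^sub>1" "z\<^sub>1 < t" and l\<^sub>1: "DERIV ?f z\<^sub>1 :> l\<^sub>1" and f0: "?f 0 = ?f t - t * l\<^sub>1"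
    using MVT[OF t(1) continuous_on_subset[OF continuous_on_free_energy_interp] differentiable] t by auto
  obtain l\<^sub>2 z\<^sub>2 where z\<^sub>2: "t < z\<^sub>2" "z\<^sub>2 < 1" and l\<^sub>2: "DERIV ?f z\<^sub>2 :> l\<^sub>2" and f1: "?f 1 = ?f t + (1 - t) * l\<^sub>2"
    using MVT[OF t(2) continuous_on_subset[OF continuous_on_free_energy_interp] differentiable] t by auto
  have "l\<^sub>1 \<le> l\<^sub>2"
  proof -
    have "l\<^sub>1 = ?f' z\<^sub>1" "l\<^sub>2 = ?f' z\<^sub>2"
      using DERIV_unique[OF l\<^sub>1 has_real_derivative_free_energy_interp] DERIV_unique[OF l\<^sub>2 has_real_derivative_free_energy_interp]
        z\<^sub>1 z\<^sub>2 t by auto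
    then show ?thesis using z\<^sub>1 z\<^sub>2 mono_directional_magn[of z\<^sub>1 z\<^sub>2] by simp
  qed
  then have "0 \<le> t * (1 - t) * (l\<^sub>2 - l\<^sub>1)" using t by simp
  also have "t * (1 - t) * (l\<^sub>2 - l\<^sub>1) = t * ?f 1 + (1 - t) * ?f 0 - ?f t"
    unfolding f0 f1 by (simp add: algebra_simps)
  finally show ?thesis by simp
qed auto

end

theorem theorem1:
  fixes V :: "'v set" and \<A> :: "'v set set"
  assumes "finite V"
    and "finite \<A>"
    and "\<And>A. A \<in> \<A> \<Longrightarrow> A \<noteq> {} \<and> A \<subseteq> V"
  shows "\<forall>x\<in>nonneg_dom \<A>. \<forall>y\<in>nonneg_dom \<A>. \<forall>t::real. 0 \<le> t \<and> t \<le> 1 \<longrightarrow>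
           free_energy V \<A> (\<lambda>A. t * x A + (1 - t) * y A)
             \<le> t * free_energy V \<A> x + (1 - t) * free_energy V \<A> y"
proof (intro ballI allI impI)
  fix x y and t :: real
  assume "x \<in> nonneg_dom \<A>" "y \<in> nonneg_dom \<A>" "0 \<le> t \<and> t \<le> 1"
  then interpret spin_glass_segment V \<A> x y
    using assms by unfold_locales (auto simp: nonneg_dom_def)
  have "(\<lambda>A. t * x A + (1 - t) * y A) = interp t" "x = interp 1" "y = interp 0"
    by (auto simp: interp_def delta_def algebra_simps)
  then show "free_energy V \<A> (\<lambda>A. t * x A + (1 - t) * y A) \<le> t * free_energy V \<A> x + (1 - t) * free_energy V \<A> y"
    using free_energy_interp_convex \<open>0 \<le> t \<and> t \<le> 1\<close>
    by (simp only: free_energy_eq_integral free_energy_interp_def)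
qed

end
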